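(* Let $(X,Y)$ be a conditionally dependent (CD) random vector with function $s$, where $X$ has distribution $F$ and $Y$ has distribution $G$. Assume $F\in\mathscr R_{-\alpha}$ for some $\alpha\ge0$, with $\overline F(x)\sim x^{-\alpha}L(x)$ for a positive slowly varying function $L$, and $\overline G(x)=o(\overline F(x))$ as $x\to\infty$. Suppose that either (i) $\mathrm E\big(Y^{\alpha+\varepsilon}s(Y)\big)<\infty$ for some $\varepsilon>0$; or (ii) there exists a positive function $g$ on $[0,\infty)$ with $g(x)\downarrow0$, $xg(x)\uparrow\infty$ and $\overline G(xg(x))=o(\overline F(x))$, such that $\limsup_{x\to\infty}\sup_{1\le y\le xg(x)}L(x/y)/L(x)<\infty$, and $\mathrm E\big(Y^\alpha s(Y)\big)<\infty$. Then, with $H$ the distribution of $XY$, $$\overline H(x)=\mathrm P(XY>x)\sim\mathrm E\big(Y^\alpha s(Y)\big)\overline F(x),\qquad x\to\infty.$$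
   Context: $X$ is real-valued with distribution $F$ such that $\overline F(x)=1-F(x)>0$ for all $x\in\mathbb{R}$, and $Y$ takes values in $(0,\infty)$ with distribution $G$, $\overline G=1-G$. $D_Y=\{y\in(0,\infty):\mathrm P(Y\in(y-\delta,y+\delta))>0\ \forall\delta>0\}$. For $x\in\mathbb{R}$, $y\in D_Y$, $\mathrm P(X>x\mid Y=y)=\lim_{t\downarrow0}\mathrm P(X>x,Y\in[y,y+t))/\mathrm P(Y\in[y,y+t))$ when the limit exists. $(X,Y)$ is conditionally dependent (CD) with function $s$ if $s$ is a positive measurable function on $[0,\infty)$ such that these conditional tails exist and $\lim_{x\to\infty}\sup_{y\in D_Y}|\mathrm P(X>x\mid Y=y)/(\overline F(x)s(y))-1|=0$. $F\in\mathscr R_{-\alpha}$ (regularly varying tail with index $\alpha$) means $\overline F(xy)/\overline F(x)\to y^{-\alpha}$ as $x\to\infty$ for each $y>0$; $L$ is slowly varying if $L(xy)/L(x)\to1$ for each $y>0$. $a(x)\sim b(x)$ means $a(x)/b(x)\to1$ as $x\to\infty$. *)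

theory Defs
  imports "HOL-Probability.Probability" "HOL-Library.Landau_Symbols"
begin

definition tail :: "'a measure \<Rightarrow> ('a \<Rightarrow> real) \<Rightarrow> real \<Rightarrow> real" where
  "tail M X x = measure M {\<omega> \<in> space M. X \<omega> > x}"

definition DY :: "'a measure \<Rightarrow> ('a \<Rightarrow> real) \<Rightarrow> real set" where
  "DY M Y = {y. 0 < y \<and> (\<forall>\<delta>>0. measure M {\<omega> \<in> space M. Y \<omega> \<in> {y-\<delta><..<y+\<delta>}} > 0)}"

text \<open>The ratio whose limit as t decreases to 0 defines P(X > x | Y = y).\<close>
definition cond_ratio :: "'a measure \<Rightarrow> ('a \<Rightarrow> real) \<Rightarrow> ('a \<Rightarrow> real) \<Rightarrow> real \<Rightarrow> real \<Rightarrow> real \<Rightarrow> real" where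
  "cond_ratio M X Y x y t =
     measure M {\<omega> \<in> space M. X \<omega> > x \<and> Y \<omega> \<in> {y..<y+t}} / measure M {\<omega> \<in> space M. Y \<omega> \<in> {y..<y+t}}"

definition cond_tail :: "'a measure \<Rightarrow> ('a \<Rightarrow> real) \<Rightarrow> ('a \<Rightarrow> real) \<Rightarrow> real \<Rightarrow> real \<Rightarrow> real" where
  "cond_tail M X Y x y = Lim (at_right 0) (cond_ratio M X Y x y)"

definition CD :: "'a measure \<Rightarrow> ('a \<Rightarrow> real) \<Rightarrow> ('a \<Rightarrow> real) \<Rightarrow> (real \<Rightarrow> real) \<Rightarrow> bool" where
  "CD M X Y s \<longleftrightarrow>
     s \<in> borel_measurable (restrict_space borel {0..}) \<and> (\<forall>y\<ge>0. s y > 0) \<and>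
     (\<forall>x y. y \<in> DY M Y \<longrightarrow> (\<exists>p. (cond_ratio M X Y x y \<longlongrightarrow> p) (at_right 0))) \<and>
     (\<forall>\<epsilon>>0. eventually (\<lambda>x. \<forall>y \<in> DY M Y.
         \<bar>cond_tail M X Y x y / (tail M X x * s y) - 1\<bar> \<le> \<epsilon>) at_top)"

definition regvar_tail :: "(real \<Rightarrow> real) \<Rightarrow> real \<Rightarrow> bool" where
  "regvar_tail Fb \<alpha> \<longleftrightarrow> (\<forall>y>0. ((\<lambda>x. Fb (x * y) / Fb x) \<longlongrightarrow> y powr (-\<alpha>)) at_top)"

definition slowly_varying :: "(real \<Rightarrow> real) \<Rightarrow> bool" where
  "slowly_varying L \<longleftrightarrow> (\<forall>y>0. ((\<lambda>x. L (x * y) / L x) \<longlongrightarrow> 1) at_top)"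

end

theory Submission
  imports Defs
begin

(* Write Fbar(x) = P(X > x).  Split P(X Y > x) at a level T(x) -> oo growing so slowly that
   P(Y > T(x)) = o(Fbar(x)).  On {Y <= T(x)}, CD says that given Y = y the tail of X at x / y is
   uniformly close to Fbar(x / y) s(y).  A differentiation argument along half-open intervals
   [y, y + t), applied on geometric level sets of this weight, integrates the conditional estimate
   against the law of Y: P(X Y > x, Y <= T(x)) lies between (1 - d) and (1 + d) times the integral
   of Fbar(x / (q y)) s(y) over {y <= T(x)}, with q = 1 for the lower and q slightly above 1 for the
   upper bound.  After division by Fbar(x), regular variation gives Fbar(x / (q y)) / Fbar(x) ->
   q^alpha y^alpha, and dominated convergence (with a majorant from Potter's bound in case (i) and
   from the bound on L(x / y) / L(x) in case (ii)) turns the integrals into q^alpha E(Y^alpha s(Y)).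
   Letting d -> 0 and q -> 1 gives the claim. *)

lemma measure_Int_Ico_le_at_Sup:
  fixes m1 m2 :: "real measure"
  assumes m1: "finite_borel_measure m1" and m2: "finite_borel_measure m2" and c: "0 \<le> c"
    and K: "K \<in> sets borel" and U: "U \<in> sets borel" and S: "S \<noteq> {}" "bdd_above S"
    and le: "\<forall>u\<in>S. measure m1 (K \<inter> {a..<u}) \<le> c * measure m2 (U \<inter> {a..<u})"
  shows "measure m1 (K \<inter> {a..<Sup S}) \<le> c * measure m2 (U \<inter> {a..<Sup S})"
proof -
  interpret m1: finite_borel_measure m1 by (fact m1)
  interpret m2: finite_borel_measure m2 by (fact m2)
  define z where "z = Sup S"
  define R where "R = c * measure m2 (U \<inter> {a..<z})"
  have bound: "measure m1 (K \<inter> {a..<z}) \<le> R + (measure m1 {..<z} - cdf m1 u)" if "u < z" for u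
  proof -
    obtain u' where u': "u' \<in> S" "u < u'" using less_cSupD[OF S(1)] \<open>u < z\<close> z_def by blast
    have "u' \<le> z" unfolding z_def by (rule cSup_upper[OF u'(1) S(2)])
    have "measure m1 (K \<inter> {a..<z}) \<le> measure m1 ((K \<inter> {a..<u'}) \<union> ({..<z} - {..u}))"
      using u' K by (intro m1.finite_measure_mono) auto
    also have "\<dots> \<le> measure m1 (K \<inter> {a..<u'}) + measure m1 ({..<z} - {..u})"
      using K by (intro measure_Un_le) auto
    also have "measure m1 (K \<inter> {a..<u'}) \<le> c * measure m2 (U \<inter> {a..<u'})" using le u' by blast
    also have "\<dots> \<le> R"
      unfolding R_def using \<open>u' \<le> z\<close> U c by (intro mult_left_mono m2.finite_measure_mono) auto
    also have "measure m1 ({..<z} - {..u}) = measure m1 {..<z} - cdf m1 u"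
      using \<open>u < z\<close> by (subst m1.finite_measure_Diff) (auto simp: cdf_def)
    finally show ?thesis by simp
  qed
  have "((\<lambda>u. R + (measure m1 {..<z} - cdf m1 u)) \<longlongrightarrow> R + (measure m1 {..<z} - measure m1 {..<z})) (at_left z)"
    by (intro tendsto_intros m1.cdf_at_left)
  then have "((\<lambda>u. R + (measure m1 {..<z} - cdf m1 u)) \<longlongrightarrow> R) (at_left z)" by simp
  then have "measure m1 (K \<inter> {a..<z}) \<le> R"
  proof (rule tendsto_lowerbound)
    show "\<forall>\<^sub>F u in at_left z. measure m1 (K \<inter> {a..<z}) \<le> R + (measure m1 {..<z} - cdf m1 u)"
      by (rule eventually_at_leftI[of "z - 1"]) (auto intro: bound)
  qed simp
  then show ?thesis unfolding R_def z_def .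
qed

lemma measure_Int_Ico_le_extend:
  fixes m1 m2 :: "real measure"
  assumes m1: "finite_borel_measure m1" and m2: "finite_borel_measure m2" and c: "0 \<le> c"
    and K: "compact K" and U: "open U" "K \<subseteq> U"
    and freq: "\<forall>y\<in>K. \<exists>\<^sub>F t in at_right 0. measure m1 {y..<y+t} \<le> c * measure m2 {y..<y+t}"
    and z: "a \<le> z" "z < b" and le: "measure m1 (K \<inter> {a..<z}) \<le> c * measure m2 (U \<inter> {a..<z})"
  shows "\<exists>u\<in>{z<..b}. measure m1 (K \<inter> {a..<u}) \<le> c * measure m2 (U \<inter> {a..<u})"
proof (cases "z \<in> K")
  case True
  interpret m1: finite_borel_measure m1 by (fact m1)
  interpret m2: finite_borel_measure m2 by (fact m2)
  have Kb: "K \<in> sets borel" using K by (simp add: compact_imp_closed borel_closed)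
  obtain e where e: "e > 0" "ball z e \<subseteq> U" using True U by (meson open_contains_ball subsetD)
  have "\<forall>d>0. \<exists>t\<in>{0<..}. t < d \<and> measure m1 {z..<z+t} \<le> c * measure m2 {z..<z+t}"
    using freq True unfolding frequently_at by (simp add: dist_real_def)
  moreover have "0 < min e (b - z)" using e z by simp
  ultimately obtain t where t: "0 < t" "t < min e (b - z)"
    and tle: "measure m1 {z..<z+t} \<le> c * measure m2 {z..<z+t}"
    by fastforce
  have "{z..<z+t} \<subseteq> U" using t e by (auto simp: dist_real_def subset_iff)
  then have U_split: "U \<inter> {a..<z+t} = (U \<inter> {a..<z}) \<union> {z..<z+t}" using z t by auto
  have "measure m1 (K \<inter> {a..<z+t}) \<le> measure m1 ((K \<inter> {a..<z}) \<union> {z..<z+t})"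
    using Kb by (intro m1.finite_measure_mono) auto
  also have "\<dots> \<le> measure m1 (K \<inter> {a..<z}) + measure m1 {z..<z+t}"
    using Kb by (intro measure_Un_le) auto
  also have "\<dots> \<le> c * measure m2 (U \<inter> {a..<z}) + c * measure m2 {z..<z+t}"
    using le tle by simp
  also have "\<dots> = c * measure m2 (U \<inter> {a..<z+t})"
    unfolding U_split using U by (subst m2.finite_measure_Union) (auto simp: algebra_simps)
  finally show ?thesis using t by (intro bexI[of _ "z + t"]) auto
next
  case False
  interpret m2: finite_borel_measure m2 by (fact m2)
  obtain e where e: "e > 0" "ball z e \<subseteq> - K"
    using False K by (meson ComplI compact_imp_closed open_Compl open_contains_ball)
  define t where "t = min e (b - z) / 2"
  have t: "0 < t" "t < e" "z + t \<le> b" using e z unfolding t_def by (auto simp: min_def field_simps)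
  have "K \<inter> {a..<z+t} = K \<inter> {a..<z}" using e t by (force simp: dist_real_def subset_iff)
  moreover have "measure m2 (U \<inter> {a..<z}) \<le> measure m2 (U \<inter> {a..<z+t})"
    using t U by (intro m2.finite_measure_mono) auto
  ultimately show ?thesis
    using le c t by (intro bexI[of _ "z + t"]) (auto intro: order_trans mult_left_mono)
qed

(* Continuous induction over u in [a, b] for the estimate restricted to [a, u): it passes to
   suprema (measure_Int_Ico_le_at_Sup) and can always be pushed further right (measure_Int_Ico_le_extend). *)
lemma measure_compact_le_open_of_frequently_Ico_le:
  fixes m1 m2 :: "real measure"
  assumes m1: "finite_borel_measure m1" and m2: "finite_borel_measure m2" and c: "0 \<le> c"
    and K: "compact K" and U: "open U" "K \<subseteq> U"
    and freq: "\<forall>y\<in>K. \<exists>\<^sub>F t in at_right 0. measure m1 {y..<y+t} \<le> c * measure m2 {y..<y+t}"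
  shows "measure m1 K \<le> c * measure m2 U"
proof -
  interpret m2: finite_borel_measure m2 by (fact m2)
  have Kb: "K \<in> sets borel" using K by (simp add: compact_imp_closed borel_closed)
  obtain B where B: "\<forall>x\<in>K. \<bar>x\<bar> \<le> B" using compact_imp_bounded[OF K] bounded_real by blast
  define a where "a = - \<bar>B\<bar> - 1"
  define b where "b = \<bar>B\<bar> + 1"
  have K_ab: "K \<inter> {a..<b} = K" using B unfolding a_def b_def by (force simp: abs_le_iff)
  define P where "P u \<longleftrightarrow> measure m1 (K \<inter> {a..<u}) \<le> c * measure m2 (U \<inter> {a..<u})" for u
  define S where "S = {u \<in> {a..b}. P u}"
  have "a \<in> S" unfolding S_def P_def a_def b_def by simp
  have S_bdd: "bdd_above S" unfolding S_def by (auto intro: bdd_aboveI[of _ b])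
  have "a \<le> Sup S" by (rule cSup_upper[OF \<open>a \<in> S\<close> S_bdd])
  have "Sup S \<le> b" using \<open>a \<in> S\<close> by (intro cSup_least) (auto simp: S_def)
  have "P (Sup S)" unfolding P_def
    by (rule measure_Int_Ico_le_at_Sup[OF m1 m2 c Kb]) (use U \<open>a \<in> S\<close> S_bdd in \<open>auto simp: S_def P_def\<close>)
  have "Sup S = b"
  proof (rule ccontr)
    assume "Sup S \<noteq> b"
    with \<open>Sup S \<le> b\<close> have "Sup S < b" by simp
    then obtain u where "u \<in> {Sup S<..b}" "P u"
      using measure_Int_Ico_le_extend[OF m1 m2 c K U freq \<open>a \<le> Sup S\<close>] \<open>P (Sup S)\<close>
      unfolding P_def by blast
    moreover from this have "u \<in> S" using \<open>a \<le> Sup S\<close> by (auto simp: S_def)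
    ultimately show False using cSup_upper[OF _ S_bdd] by fastforce
  qed
  then have "measure m1 K \<le> c * measure m2 (U \<inter> {a..<b})"
    using \<open>P (Sup S)\<close> K_ab unfolding P_def by simp
  also have "\<dots> \<le> c * measure m2 U"
    using U c by (intro mult_left_mono m2.finite_measure_mono) auto
  finally show ?thesis .
qed

lemma measure_le_of_frequently_Ico_le:
  fixes m1 m2 :: "real measure"
  assumes m1: "finite_borel_measure m1" and m2: "finite_borel_measure m2" and c: "0 \<le> c"
    and B: "B \<in> sets borel"
    and freq: "\<forall>y\<in>B. \<exists>\<^sub>F t in at_right 0. measure m1 {y..<y+t} \<le> c * measure m2 {y..<y+t}"
  shows "measure m1 B \<le> c * measure m2 B"
proof -
  interpret m1: finite_borel_measure m1 by (fact m1)
  interpret m2: finite_borel_measure m2 by (fact m2)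
  have compact_le: "measure m1 K \<le> c * measure m2 K" if K: "compact K" "K \<subseteq> B" for K
  proof (cases "c = 0")
    case True
    then show ?thesis
      using measure_compact_le_open_of_frequently_Ico_le[OF m1 m2 c K(1) open_UNIV] freq K(2) by auto
  next
    case False
    have "K \<in> sets borel" using K by (simp add: compact_imp_closed borel_closed)
    have "ennreal (measure m1 K / c) \<le> (INF U\<in>{U. K \<subseteq> U \<and> open U}. emeasure m2 U)"
    proof (rule INF_greatest)
      fix U assume "U \<in> {U. K \<subseteq> U \<and> open U}"
      then have "measure m1 K \<le> c * measure m2 U"
        using measure_compact_le_open_of_frequently_Ico_le[OF m1 m2 c K(1)] freq K(2) by blast
      then show "ennreal (measure m1 K / c) \<le> emeasure m2 U"
        using False c by (simp add: m2.emeasure_eq_measure divide_le_eq mult.commute)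
    qed
    also have "\<dots> = emeasure m2 K"
      using outer_regular[OF m2.M_is_borel _ \<open>K \<in> sets borel\<close>] by simp
    finally show ?thesis using False c by (simp add: m2.emeasure_eq_measure divide_le_eq mult.commute)
  qed
  have "emeasure m1 B = (SUP K\<in>{K. K \<subseteq> B \<and> compact K}. emeasure m1 K)"
    using inner_regular[OF m1.M_is_borel _ B] by simp
  also have "\<dots> \<le> ennreal (c * measure m2 B)"
  proof (rule SUP_least)
    fix K assume "K \<in> {K. K \<subseteq> B \<and> compact K}"
    then have "measure m1 K \<le> c * measure m2 K" "measure m2 K \<le> measure m2 B"
      using compact_le B by (auto intro!: m2.finite_measure_mono)
    then have "measure m1 K \<le> c * measure m2 B" using c by (meson mult_left_mono order_trans)
    then show "emeasure m1 K \<le> ennreal (c * measure m2 B)"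
      by (simp add: m1.emeasure_eq_measure ennreal_leI)
  qed
  finally show ?thesis using c by (simp add: m1.emeasure_eq_measure)
qed

lemma geometric_level_sets:
  fixes v :: "'a \<Rightarrow> real"
  assumes v: "\<forall>y\<in>B. 0 < v y \<and> v y \<le> S" and r: "0 < r" "r < 1"
  defines "L k \<equiv> {y\<in>B. S * r^Suc k < v y \<and> v y \<le> S * r^k}"
  shows "disjoint_family L" and "(\<Union>k. L k) = B"
proof -
  have "L i \<inter> L j = {}" if "i < j" for i j
  proof -
    have "r^j \<le> r^Suc i" using r that by (intro power_decreasing) auto
    have False if "y \<in> L i" "y \<in> L j" for y
    proof -
      have "0 < S" using that(2) v unfolding L_def by fastforce
      then have "S * r^j \<le> S * r^Suc i" using \<open>r^j \<le> r^Suc i\<close> by simp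
      then show False using that unfolding L_def by auto
    qed
    then show ?thesis by blast
  qed
  then show "disjoint_family L"
    unfolding disjoint_family_on_def by (metis Int_commute linorder_neqE_nat)
  show "(\<Union>k. L k) = B"
  proof (intro antisym subsetI)
    fix y assume "y \<in> B"
    then have vy: "0 < v y" "v y \<le> S" using v by auto
    then have "0 < S" by linarith
    obtain n where "r^n < v y / S" using r vy \<open>0 < S\<close> real_arch_pow_inv[of "v y / S" r] by auto
    moreover have "r^Suc n \<le> r^n" using r by (intro power_decreasing) auto
    ultimately have ex: "\<exists>n. r^Suc n < v y / S" by (meson le_less_trans)
    define k where "k = (LEAST n. r^Suc n < v y / S)"
    have "r^Suc k < v y / S" unfolding k_def by (rule LeastI_ex[OF ex])
    moreover have "v y / S \<le> r^k"
    proof (cases k)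
      case (Suc m)
      then have "\<not> r^Suc m < v y / S" using not_less_Least[of m "\<lambda>n. r^Suc n < v y / S"] k_def by simp
      then show ?thesis using Suc by simp
    qed (use vy \<open>0 < S\<close> in simp)
    ultimately have "S * r^Suc k < v y" "v y \<le> S * r^k"
      using \<open>0 < S\<close> by (simp_all add: pos_less_divide_eq pos_divide_le_eq mult.commute)
    then show "y \<in> (\<Union>k. L k)" unfolding L_def using \<open>y \<in> B\<close> by blast
  qed (auto simp: L_def)
qed
lemma set_integral_sums:
  fixes f :: "'a \<Rightarrow> real"
  assumes A: "\<And>k. A k \<in> sets M" and disj: "disjoint_family A"
    and f: "set_integrable M (\<Union>k. A k) f"
  shows "(\<lambda>k. LINT x:A k|M. f x) sums (LINT x:(\<Union>k. A k)|M. f x)"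
proof -
  have U: "(\<Union>n. \<Union>k<n. A k) = (\<Union>k. A k)" by (auto intro: lessI)
  have "incseq (\<lambda>n. \<Union>k<n. A k)" by (intro monoI UN_mono) auto
  from set_integral_cont_up[of "\<lambda>n. \<Union>k<n. A k", OF _ this] 
  have lim: "(\<lambda>n. LINT x:(\<Union>k<n. A k)|M. f x) \<longlonglongrightarrow> (LINT x:(\<Union>k. A k)|M. f x)"
    unfolding U using A f by blast
  have eq: "(LINT x:(\<Union>k<n. A k)|M. f x) = (\<Sum>k<n. LINT x:A k|M. f x)" for n
    using disj A by (intro set_integral_finite_Union set_integrable_subset[OF f])
      (auto simp: disjoint_family_on_def)
  show ?thesis using lim unfolding eq sums_def .
qed

lemma (in finite_measure) set_integrable_bounded:
  fixes f :: "'a \<Rightarrow> real"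
  assumes "A \<in> sets M" "f \<in> borel_measurable M" "\<forall>x\<in>A. \<bar>f x\<bar> \<le> b"
  shows "set_integrable M A f"
  unfolding set_integrable_def
  by (rule integrable_const_bound[where B = "\<bar>b\<bar>"]) (use assms in \<open>auto intro!: AE_I2 simp: indicator_def\<close>)

lemma (in finite_measure) set_integral_bounds:
  fixes f :: "'a \<Rightarrow> real"
  assumes A: "A \<in> sets M" and f: "f \<in> borel_measurable M" and bounds: "\<forall>x\<in>A. a \<le> f x \<and> f x \<le> b"
  shows "a * measure M A \<le> (LINT x:A|M. f x)" and "(LINT x:A|M. f x) \<le> b * measure M A"
proof -
  have f_int: "set_integrable M A f"
    using A f bounds by (intro set_integrable_bounded[where b = "\<bar>a\<bar> + \<bar>b\<bar>"]) fastforce+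
  have const_int: "set_integrable M A (\<lambda>_. c)" for c :: real
    using A by (intro set_integrable_bounded[where b = "\<bar>c\<bar>"]) auto
  have const: "(LINT x:A|M. c) = c * measure M A" for c
    using A by (simp add: set_integral_const)
  show "a * measure M A \<le> (LINT x:A|M. f x)"
    using set_integral_mono[OF const_int f_int] bounds const by simp
  show "(LINT x:A|M. f x) \<le> b * measure M A"
    using set_integral_mono[OF f_int const_int] bounds const by simp
qed

lemma geometric_level_sets_sums:
  fixes m :: "real measure" and v :: "real \<Rightarrow> real"
  assumes m: "finite_borel_measure m" and B: "B \<in> sets borel" and v: "v \<in> borel_measurable borel"
    and v_bounds: "\<forall>y\<in>B. 0 < v y \<and> v y \<le> S" and r: "0 < r" "r < 1"
  defines "L k \<equiv> {y\<in>B. S * r^Suc k < v y \<and> v y \<le> S * r^k}"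
  shows "(\<lambda>k. measure m (L k)) sums measure m B" and "(\<lambda>k. LINT y:L k|m. v y) sums (LINT y:B|m. v y)"
proof -
  interpret finite_borel_measure m by (fact m)
  have "L k \<in> sets borel" for k unfolding L_def using B v by measurable
  then have L: "L k \<in> sets m" for k by (rule sets_M)
  note partition = geometric_level_sets[OF v_bounds r, folded L_def]
  show "(\<lambda>k. measure m (L k)) sums measure m B"
    using finite_measure_UNION[of L] L partition by auto
  have "v \<in> borel_measurable m" using v by (simp add: measurable_cong_sets[OF M_is_borel refl])
  then have "set_integrable m B v" using B v_bounds by (intro set_integrable_bounded) auto
  then show "(\<lambda>k. LINT y:L k|m. v y) sums (LINT y:B|m. v y)"
    using set_integral_sums[of L m v] L partition by simp
qed

lemma measure_le_set_integral_on_level: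
  fixes m1 m2 :: "real measure" and v :: "real \<Rightarrow> real"
  assumes m1: "finite_borel_measure m1" and m2: "finite_borel_measure m2"
    and A: "A \<in> sets borel" and v: "v \<in> borel_measurable borel" and r: "0 < r" "r < 1"
    and level: "\<forall>y\<in>A. a * r < v y \<and> v y \<le> a"
    and freq: "\<forall>y\<in>A. \<exists>\<^sub>F t in at_right 0. measure m1 {y..<y+t} \<le> v y * measure m2 {y..<y+t}"
  shows "r * measure m1 A \<le> (LINT y:A|m2. v y)"
proof (cases "A = {}")
  case False
  interpret m2: finite_borel_measure m2 by (fact m2)
  obtain y where "y \<in> A" using False by blast
  then have "a * r < a * 1" using level by fastforce
  then have "0 < a" using r mult_less_cancel_left[of a r 1] by simp
  have "\<forall>y\<in>A. \<exists>\<^sub>F t in at_right 0. measure m1 {y..<y+t} \<le> a * measure m2 {y..<y+t}"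
  proof
    fix y assume "y \<in> A"
    with freq have "\<exists>\<^sub>F t in at_right 0. measure m1 {y..<y+t} \<le> v y * measure m2 {y..<y+t}" ..
    then show "\<exists>\<^sub>F t in at_right 0. measure m1 {y..<y+t} \<le> a * measure m2 {y..<y+t}"
      by (rule frequently_elim1) (use level \<open>y \<in> A\<close> in \<open>meson measure_nonneg mult_right_mono order_trans\<close>)
  qed
  then have "measure m1 A \<le> a * measure m2 A"
    using \<open>0 < a\<close> by (intro measure_le_of_frequently_Ico_le[OF m1 m2 _ A]) simp
  then have "r * measure m1 A \<le> a * r * measure m2 A"
    using r by (simp add: mult_left_mono mult.assoc mult.left_commute)
  also have "\<dots> \<le> (LINT y:A|m2. v y)"
    using A v level by (intro m2.set_integral_bounds(1)[where b = a])
      (auto simp: less_imp_le measurable_cong_sets[OF m2.M_is_borel refl])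
  finally show ?thesis .
qed (simp add: set_lebesgue_integral_def)

lemma set_integral_le_measure_on_level:
  fixes m1 m2 :: "real measure" and v :: "real \<Rightarrow> real"
  assumes m1: "finite_borel_measure m1" and m2: "finite_borel_measure m2"
    and A: "A \<in> sets borel" and v: "v \<in> borel_measurable borel" and r: "0 < r" "r < 1"
    and level: "\<forall>y\<in>A. a * r < v y \<and> v y \<le> a"
    and freq: "\<forall>y\<in>A. \<exists>\<^sub>F t in at_right 0. v y * measure m2 {y..<y+t} \<le> measure m1 {y..<y+t}"
  shows "r * (LINT y:A|m2. v y) \<le> measure m1 A"
proof (cases "A = {}")
  case False
  interpret m2: finite_borel_measure m2 by (fact m2)
  obtain y where "y \<in> A" using False by blast
  then have "a * r < a * 1" using level by fastforce
  then have "0 < a" using r mult_less_cancel_left[of a r 1] by simp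
  then have "0 < a * r" using r by simp
  have "\<forall>y\<in>A. \<exists>\<^sub>F t in at_right 0. measure m2 {y..<y+t} \<le> 1 / (a * r) * measure m1 {y..<y+t}"
  proof
    fix y assume "y \<in> A"
    with freq have "\<exists>\<^sub>F t in at_right 0. v y * measure m2 {y..<y+t} \<le> measure m1 {y..<y+t}" ..
    then show "\<exists>\<^sub>F t in at_right 0. measure m2 {y..<y+t} \<le> 1 / (a * r) * measure m1 {y..<y+t}"
    proof (rule frequently_elim1)
      fix t assume "v y * measure m2 {y..<y+t} \<le> measure m1 {y..<y+t}"
      moreover have "a * r * measure m2 {y..<y+t} \<le> v y * measure m2 {y..<y+t}"
        using level \<open>y \<in> A\<close> by (intro mult_right_mono) auto
      ultimately show "measure m2 {y..<y+t} \<le> 1 / (a * r) * measure m1 {y..<y+t}"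
        using \<open>0 < a * r\<close> by (simp add: field_simps)
    qed
  qed
  then have "measure m2 A \<le> 1 / (a * r) * measure m1 A"
    using \<open>0 < a * r\<close> by (intro measure_le_of_frequently_Ico_le[OF m2 m1 _ A]) simp
  have "r * (LINT y:A|m2. v y) \<le> r * (a * measure m2 A)"
    using A v level r by (intro mult_left_mono m2.set_integral_bounds(2)[where a = "a * r"])
      (auto simp: less_imp_le measurable_cong_sets[OF m2.M_is_borel refl])
  also have "\<dots> \<le> measure m1 A"
    using \<open>measure m2 A \<le> 1 / (a * r) * measure m1 A\<close> \<open>0 < a * r\<close> by (simp add: field_simps)
  finally show ?thesis .
qed (simp add: set_lebesgue_integral_def)

lemma measure_le_set_integral_of_frequently_Ico_le:
  fixes m1 m2 :: "real measure" and v :: "real \<Rightarrow> real"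
  assumes m1: "finite_borel_measure m1" and m2: "finite_borel_measure m2"
    and B: "B \<in> sets borel" and v: "v \<in> borel_measurable borel" and v_bounds: "\<forall>y\<in>B. 0 < v y \<and> v y \<le> S"
    and freq: "\<forall>y\<in>B. \<exists>\<^sub>F t in at_right 0. measure m1 {y..<y+t} \<le> v y * measure m2 {y..<y+t}"
  shows "measure m1 B \<le> (LINT y:B|m2. v y)"
proof (rule field_le_mult_one_interval)
  fix r :: real assume r: "0 < r" "r < 1"
  define L where "L k = {y\<in>B. S * r^Suc k < v y \<and> v y \<le> S * r^k}" for k
  have "r * measure m1 (L k) \<le> (LINT y:L k|m2. v y)" for k
    using B v freq unfolding L_def
    by (intro measure_le_set_integral_on_level[OF m1 m2 _ v r, where a = "S * r^k"])
      (simp_all add: mult_ac)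
  moreover have "(\<lambda>k. r * measure m1 (L k)) sums (r * measure m1 B)"
    unfolding L_def by (intro sums_mult geometric_level_sets_sums[OF m1 B v v_bounds r])
  moreover have "(\<lambda>k. LINT y:L k|m2. v y) sums (LINT y:B|m2. v y)"
    unfolding L_def by (rule geometric_level_sets_sums[OF m2 B v v_bounds r])
  ultimately show "r * measure m1 B \<le> (LINT y:B|m2. v y)" by (rule sums_le)
qed

lemma set_integral_le_measure_of_frequently_Ico_ge:
  fixes m1 m2 :: "real measure" and v :: "real \<Rightarrow> real"
  assumes m1: "finite_borel_measure m1" and m2: "finite_borel_measure m2"
    and B: "B \<in> sets borel" and v: "v \<in> borel_measurable borel" and v_bounds: "\<forall>y\<in>B. 0 < v y \<and> v y \<le> S"
    and freq: "\<forall>y\<in>B. \<exists>\<^sub>F t in at_right 0. v y * measure m2 {y..<y+t} \<le> measure m1 {y..<y+t}"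
  shows "(LINT y:B|m2. v y) \<le> measure m1 B"
proof (rule field_le_mult_one_interval)
  fix r :: real assume r: "0 < r" "r < 1"
  define L where "L k = {y\<in>B. S * r^Suc k < v y \<and> v y \<le> S * r^k}" for k
  have "r * (LINT y:L k|m2. v y) \<le> measure m1 (L k)" for k
    using B v freq unfolding L_def
    by (intro set_integral_le_measure_on_level[OF m1 m2 _ v r, where a = "S * r^k"])
      (simp_all add: mult_ac)
  moreover have "(\<lambda>k. r * (LINT y:L k|m2. v y)) sums (r * (LINT y:B|m2. v y))"
    unfolding L_def by (intro sums_mult geometric_level_sets_sums[OF m2 B v v_bounds r])
  moreover have "(\<lambda>k. measure m1 (L k)) sums measure m1 B"
    unfolding L_def by (rule geometric_level_sets_sums[OF m1 B v v_bounds r])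
  ultimately show "r * (LINT y:B|m2. v y) \<le> measure m1 B" by (rule sums_le)
qed

lemma filterlim_divide_const_at_top:
  fixes c :: real
  assumes "0 < c"
  shows "filterlim (\<lambda>x. x / c) at_top at_top"
  using filterlim_at_top_mult_tendsto_pos[OF tendsto_const _ filterlim_ident, of "inverse c"] assms
  by (simp add: divide_inverse)

lemma regvar_tail_divide_tendsto:
  fixes Fb :: "real \<Rightarrow> real"
  assumes "regvar_tail Fb \<alpha>" "0 < c"
  shows "((\<lambda>x. Fb (x / c) / Fb x) \<longlongrightarrow> c powr \<alpha>) at_top"
proof -
  have "((\<lambda>x. Fb (x * inverse c) / Fb x) \<longlongrightarrow> inverse c powr (- \<alpha>)) at_top"
    using assms unfolding regvar_tail_def by simp
  then show ?thesis using assms by (simp add: divide_inverse powr_minus inverse_powr)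
qed

lemma regvar_tail_doubling:
  fixes Fb :: "real \<Rightarrow> real"
  assumes RV: "regvar_tail Fb \<alpha>" and "\<alpha> < \<beta>" and pos: "\<forall>x. 0 < Fb x"
  shows "\<exists>x1>0. \<forall>u\<ge>x1. Fb u \<le> 2 powr \<beta> * Fb (u * 2)"
proof -
  have "2 powr (- \<beta>) < 2 powr (- \<alpha>)" using \<open>\<alpha> < \<beta>\<close> by (intro powr_less_mono) auto
  moreover have "((\<lambda>u. Fb (u * 2) / Fb u) \<longlongrightarrow> 2 powr (- \<alpha>)) at_top"
    using RV unfolding regvar_tail_def by simp
  ultimately have "\<forall>\<^sub>F u in at_top. 2 powr (- \<beta>) < Fb (u * 2) / Fb u"
    by (rule order_tendstoD(1)[rotated])
  then obtain x1 where x1: "\<And>u. x1 \<le> u \<Longrightarrow> 2 powr (- \<beta>) < Fb (u * 2) / Fb u"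
    by (auto simp: eventually_at_top_linorder)
  have "Fb u \<le> 2 powr \<beta> * Fb (u * 2)" if "max x1 1 \<le> u" for u
  proof -
    have "2 powr (- \<beta>) * Fb u < Fb (u * 2)" using x1[of u] that pos by (simp add: field_simps)
    then have "2 powr \<beta> * (2 powr (- \<beta>) * Fb u) \<le> 2 powr \<beta> * Fb (u * 2)" by simp
    moreover have "2 powr \<beta> * (2 powr (- \<beta>) * Fb u) = Fb u"
      by (simp add: mult.assoc[symmetric] powr_add[symmetric])
    ultimately show ?thesis by simp
  qed
  then show ?thesis by (intro exI[of _ "max x1 1"]) auto
qed

lemma regvar_tail_Potter_bound:
  fixes Fb :: "real \<Rightarrow> real"
  assumes RV: "regvar_tail Fb \<alpha>" and "\<alpha> < \<beta>" "0 \<le> \<beta>"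
    and pos: "\<forall>x. 0 < Fb x" and anti: "antimono Fb"
  shows "\<exists>x1>0. \<forall>x z. 1 \<le> z \<longrightarrow> x1 \<le> x / z \<longrightarrow> Fb (x / z) \<le> (2 * z) powr \<beta> * Fb x"
proof -
  obtain x1 where "0 < x1" and double: "\<forall>u\<ge>x1. Fb u \<le> 2 powr \<beta> * Fb (u * 2)"
    using regvar_tail_doubling[OF RV \<open>\<alpha> < \<beta>\<close> pos] by blast
  have iterate: "Fb u \<le> (2 powr \<beta>) ^ n * Fb (u * 2 ^ n)" if "x1 \<le> u" for u n
  proof (induction n)
    case (Suc n)
    have "x1 \<le> u * 2 ^ n" using that \<open>0 < x1\<close> by (smt (verit) mult_le_cancel_left1 one_le_power)
    then have "Fb (u * 2 ^ n) \<le> 2 powr \<beta> * Fb (u * 2 ^ Suc n)"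
      using double by (metis mult.assoc power_Suc2)
    then have "(2 powr \<beta>) ^ n * Fb (u * 2 ^ n) \<le> (2 powr \<beta>) ^ Suc n * Fb (u * 2 ^ Suc n)"
      by (simp add: mult_left_mono mult.assoc)
    with Suc.IH show ?case by linarith
  qed simp
  have "Fb (x / z) \<le> (2 * z) powr \<beta> * Fb x" if z: "1 \<le> z" and xz: "x1 \<le> x / z" for x z
  proof -
    define n where "n = nat \<lceil>log 2 z\<rceil>"
    have "0 \<le> log 2 z" using z by simp
    then have n: "log 2 z \<le> real n" "real n < log 2 z + 1" unfolding n_def by linarith+
    have "z \<le> 2 ^ n"
      using powr_mono[OF n(1), of 2] z by (simp add: powr_realpow)
    have "2 ^ n < 2 * z"
      using powr_less_mono[OF n(2), of 2] z by (simp add: powr_realpow powr_add)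
    have "0 < x / z" using xz \<open>0 < x1\<close> by linarith
    then have "0 < x" using z by (simp add: zero_less_divide_iff)
    have "Fb (x / z) \<le> (2 powr \<beta>) ^ n * Fb (x / z * 2 ^ n)" by (rule iterate[OF xz])
    also have "Fb (x / z * 2 ^ n) \<le> Fb x"
    proof (rule antimonoD[OF anti])
      show "x \<le> x / z * 2 ^ n" using \<open>z \<le> 2 ^ n\<close> \<open>0 < x\<close> z by (simp add: field_simps)
    qed
    then have "(2 powr \<beta>) ^ n * Fb (x / z * 2 ^ n) \<le> (2 powr \<beta>) ^ n * Fb x" by simp
    also have "(2 powr \<beta>) ^ n = (2 ^ n) powr \<beta>"
      by (simp add: powr_realpow[symmetric] powr_powr mult.commute)
    also have "(2 ^ n) powr \<beta> * Fb x \<le> (2 * z) powr \<beta> * Fb x"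
      using \<open>2 ^ n < 2 * z\<close> \<open>0 \<le> \<beta>\<close> pos by (intro mult_right_mono powr_mono2) (auto simp: less_imp_le)
    finally show ?thesis .
  qed
  with \<open>0 < x1\<close> show ?thesis by blast
qed

lemma asymp_equiv_powr_ratio_bound:
  fixes Fb L :: "real \<Rightarrow> real"
  assumes equiv: "Fb \<sim>[at_top] (\<lambda>x. x powr (- \<alpha>) * L x)"
    and L: "\<forall>x>0. 0 < L x" and pos: "\<forall>x. 0 < Fb x"
  shows "\<exists>u0>0. \<forall>u\<ge>u0. \<forall>v\<ge>u0. Fb v / Fb u \<le> 4 * (u / v) powr \<alpha> * (L v / L u)"
proof -
  have "((\<lambda>u. Fb u / (u powr (- \<alpha>) * L u)) \<longlongrightarrow> 1) at_top"
    using pos by (intro asymp_equivD_strong[OF equiv] always_eventually) (auto simp: less_imp_neq[symmetric])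
  then have "\<forall>\<^sub>F u in at_top. 1 / 2 < Fb u / (u powr (- \<alpha>) * L u) \<and> Fb u / (u powr (- \<alpha>) * L u) < 2"
    by (intro eventually_conj order_tendstoD) auto
  then obtain u0 where u0: "\<And>u. u0 \<le> u \<Longrightarrow>
      1 / 2 < Fb u / (u powr (- \<alpha>) * L u) \<and> Fb u / (u powr (- \<alpha>) * L u) < 2"
    by (auto simp: eventually_at_top_linorder)
  have "Fb v / Fb u \<le> 4 * (u / v) powr \<alpha> * (L v / L u)" if "max u0 1 \<le> u" "max u0 1 \<le> v" for u v
  proof -
    have "0 < u" "0 < v" "0 < L u" "0 < L v" using that L by auto
    then have "1 / 2 * (u powr (- \<alpha>) * L u) < Fb u" "Fb v < 2 * (v powr (- \<alpha>) * L v)"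
      using u0[of u] u0[of v] that by (auto simp: field_simps)
    then have "Fb v / Fb u \<le> (2 * (v powr (- \<alpha>) * L v)) / (1 / 2 * (u powr (- \<alpha>) * L u))"
      using pos \<open>0 < u\<close> \<open>0 < v\<close> \<open>0 < L u\<close> \<open>0 < L v\<close> by (intro frac_le) (auto simp: less_imp_le)
    also have "\<dots> = 4 * (v powr (- \<alpha>) / u powr (- \<alpha>)) * (L v / L u)" by (simp add: field_simps)
    also have "v powr (- \<alpha>) / u powr (- \<alpha>) = (u / v) powr \<alpha>"
      using \<open>0 < u\<close> \<open>0 < v\<close> by (simp add: powr_minus powr_divide field_simps)
    finally show ?thesis .
  qed
  then show ?thesis by (intro exI[of _ "max u0 1"]) auto
qed

lemma smallo_compose_tendsto_zero:
  fixes f g :: "real \<Rightarrow> real"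
  assumes "f \<in> o[at_top](g)" "filterlim T at_top at_top"
    and "((\<lambda>x. g (T x) / g x) \<longlongrightarrow> c) at_top" "\<forall>x. g x \<noteq> 0"
  shows "((\<lambda>x. f (T x) / g x) \<longlongrightarrow> 0) at_top"
proof -
  have "(\<lambda>x. f (T x)) \<in> o[at_top](\<lambda>x. g (T x))"
    using assms(1,2) by (rule landau_o.small.compose)
  also have "(\<lambda>x. g (T x)) \<in> O[at_top](g)"
    using assms(3,4) by (intro bigoI_tendsto[where c = c]) auto
  finally show ?thesis by (rule smalloD_tendsto)
qed

lemma tail_ratio_le_Potter:
  fixes Fb :: "real \<Rightarrow> real"
  assumes anti: "antimono Fb" and pos: "\<forall>x. 0 < Fb x"
    and Potter: "\<forall>x z. 1 \<le> z \<longrightarrow> x1 \<le> x / z \<longrightarrow> Fb (x / z) \<le> (2 * z) powr \<beta> * Fb x"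
    and xz: "0 < x" "0 < z" "x1 \<le> x / z"
  shows "Fb (x / z) / Fb x \<le> 1 + (2 * z) powr \<beta>"
proof (cases "z \<le> 1")
  case True
  then have "x \<le> x / z" using xz by (simp add: le_divide_eq)
  then have "Fb (x / z) \<le> Fb x" by (rule antimonoD[OF anti])
  then show ?thesis using pos by (simp add: add_increasing2)
next
  case False
  then have "Fb (x / z) \<le> (2 * z) powr \<beta> * Fb x" using Potter xz by simp
  then have "Fb (x / z) \<le> (1 + (2 * z) powr \<beta>) * Fb x" using pos[rule_format, of x] by (simp add: algebra_simps)
  then show ?thesis using pos by (simp add: divide_le_eq)
qed

lemma tail_ratio_le_slowly_varying:
  fixes Fb L :: "real \<Rightarrow> real"
  assumes anti: "antimono Fb" and pos: "\<forall>x. 0 < Fb x" and "0 < u0"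
    and u0: "\<forall>u\<ge>u0. \<forall>v\<ge>u0. Fb v / Fb u \<le> 4 * (u / v) powr \<alpha> * (L v / L u)"
    and u: "u0 \<le> u" "u0 \<le> u / t" and C: "\<forall>y\<in>{1..t}. L (u / y) / L u \<le> C"
    and y: "0 < y" "y \<le> t"
  shows "Fb (u / y) / Fb u \<le> 1 + 4 * \<bar>C\<bar> * y powr \<alpha>"
proof (cases "y \<le> 1")
  case True
  then have "u \<le> u / y" using y u \<open>0 < u0\<close> by (simp add: le_divide_eq)
  then have "Fb (u / y) \<le> Fb u" by (rule antimonoD[OF anti])
  then show ?thesis using pos by (simp add: add_increasing2)
next
  case False
  have "u / t \<le> u / y" using y u \<open>0 < u0\<close> by (intro divide_left_mono) auto
  then have "u0 \<le> u / y" using u by linarith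
  have "L (u / y) / L u \<le> \<bar>C\<bar>" using C False y by (auto intro: order_trans[OF _ abs_ge_self])
  have "Fb (u / y) / Fb u \<le> 4 * (u / (u / y)) powr \<alpha> * (L (u / y) / L u)"
    using u0 u(1) \<open>u0 \<le> u / y\<close> by blast
  also have "u / (u / y) = y" using u \<open>0 < u0\<close> y by simp
  also have "4 * y powr \<alpha> * (L (u / y) / L u) \<le> 4 * y powr \<alpha> * \<bar>C\<bar>"
    using \<open>L (u / y) / L u \<le> \<bar>C\<bar>\<close> by (intro mult_left_mono) auto
  finally show ?thesis by (simp add: mult_ac)
qed

locale cd_vector = prob_space M for M :: "'a measure" +
  fixes X Y :: "'a \<Rightarrow> real" and s :: "real \<Rightarrow> real"
  assumes X_measurable [measurable]: "X \<in> borel_measurable M"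
    and Y_measurable [measurable]: "Y \<in> borel_measurable M"
    and Y_pos: "\<forall>\<omega>\<in>space M. 0 < Y \<omega>"
    and tail_X_pos: "\<forall>x. 0 < tail M X x"
    and CD: "CD M X Y s"
begin

lemma antimono_tail_X: "antimono (tail M X)"
  unfolding tail_def by (intro antimonoI finite_measure_mono) auto

lemma tail_X_le_1: "tail M X x \<le> 1"
  unfolding tail_def by simp

lemma tail_X_borel [measurable]: "tail M X \<in> borel_measurable borel"
proof -
  have "(\<lambda>x. - tail M X x) \<in> borel_measurable borel"
    using antimono_tail_X by (intro borel_measurable_mono) (simp add: mono_def antimono_def)
  then show ?thesis by (metis borel_measurable_uminus_eq)
qed

lemma s_pos: "0 \<le> y \<Longrightarrow> 0 < s y"
  using CD unfolding CD_def by auto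

lemma indicator_s_borel [measurable]: "(\<lambda>y. indicator {0..} y * s y) \<in> borel_measurable borel"
proof -
  have "s \<in> borel_measurable (restrict_space borel {0..})" using CD unfolding CD_def by blast
  then show ?thesis by (subst (asm) borel_measurable_restrict_space_iff) auto
qed

lemma s_Y_measurable [measurable]: "(\<lambda>\<omega>. s (Y \<omega>)) \<in> borel_measurable M"
proof (rule measurable_cong[THEN iffD1])
  show "(\<lambda>\<omega>. indicator {0..} (Y \<omega>) * s (Y \<omega>)) \<in> borel_measurable M" by measurable
qed (use Y_pos in \<open>auto simp: less_imp_le\<close>)

lemma cond_ratio_tendsto:
  assumes "y \<in> DY M Y"
  shows "(cond_ratio M X Y x y \<longlongrightarrow> cond_tail M X Y x y) (at_right 0)"
proof -
  obtain p where p: "(cond_ratio M X Y x y \<longlongrightarrow> p) (at_right 0)"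
    using CD assms unfolding CD_def by blast
  then have "cond_tail M X Y x y = p"
    unfolding cond_tail_def by (intro tendsto_Lim) simp_all
  with p show ?thesis by simp
qed

lemma cond_tail_le_1:
  assumes "y \<in> DY M Y"
  shows "cond_tail M X Y x y \<le> 1"
proof (rule tendsto_upperbound[OF cond_ratio_tendsto[OF assms]])
  have "cond_ratio M X Y x y t \<le> 1" for t
  proof -
    have "prob {\<omega> \<in> space M. x < X \<omega> \<and> Y \<omega> \<in> {y..<y+t}} \<le> prob {\<omega> \<in> space M. Y \<omega> \<in> {y..<y+t}}"
      by (intro finite_measure_mono) auto
    then show ?thesis unfolding cond_ratio_def by (auto simp: divide_le_eq_1 less_le)
  qed
  then show "\<forall>\<^sub>F t in at_right 0. cond_ratio M X Y x y t \<le> 1" by simp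
qed simp

lemma CD_tail_bounds:
  assumes "0 < e"
  shows "\<forall>\<^sub>F x in at_top. \<forall>y\<in>DY M Y.
           (1 - e) * (tail M X x * s y) < cond_tail M X Y x y \<and> cond_tail M X Y x y < (1 + e) * (tail M X x * s y)"
proof -
  have "\<forall>\<^sub>F x in at_top. \<forall>y\<in>DY M Y. \<bar>cond_tail M X Y x y / (tail M X x * s y) - 1\<bar> \<le> e / 2"
    using CD assms unfolding CD_def by (meson half_gt_zero)
  then show ?thesis
  proof (rule eventually_mono, intro ballI)
    fix x y assume close: "\<forall>y\<in>DY M Y. \<bar>cond_tail M X Y x y / (tail M X x * s y) - 1\<bar> \<le> e / 2"
      and y: "y \<in> DY M Y"
    define b where "b = tail M X x * s y"
    have "0 < b" using tail_X_pos s_pos y unfolding b_def by (simp add: DY_def)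
    have "cond_tail M X Y x y / b - 1 = (cond_tail M X Y x y - b) / b" using \<open>0 < b\<close> by (simp add: field_simps)
    then have "\<bar>cond_tail M X Y x y - b\<bar> = \<bar>cond_tail M X Y x y / b - 1\<bar> * b"
      using \<open>0 < b\<close> by (simp add: abs_divide)
    also have "\<dots> \<le> e / 2 * b"
      using close y \<open>0 < b\<close> unfolding b_def by (intro mult_right_mono) auto
    also have "\<dots> < e * b" using \<open>0 < b\<close> assms by simp
    finally show "(1 - e) * b < cond_tail M X Y x y \<and> cond_tail M X Y x y < (1 + e) * b"
      by (simp add: abs_less_iff algebra_simps)
  qed
qed

lemma s_bounded_on_DY: "\<exists>S>0. \<forall>y\<in>DY M Y. s y \<le> S"
proof -
  obtain x where x: "\<forall>y\<in>DY M Y. (1 - 1/2) * (tail M X x * s y) < cond_tail M X Y x y"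
    using eventually_happens'[OF _ CD_tail_bounds[of "1/2"]] by auto
  have "s y \<le> 2 / tail M X x" if "y \<in> DY M Y" for y
    using x cond_tail_le_1[OF that, of x] that tail_X_pos by (auto simp: field_simps)
  then show ?thesis using tail_X_pos by (intro exI[of _ "2 / tail M X x"]) auto
qed

lemma DY_borel [measurable]: "DY M Y \<in> sets borel"
proof -
  define N where "N = {y. \<exists>\<delta>>0. prob {\<omega> \<in> space M. Y \<omega> \<in> {y-\<delta><..<y+\<delta>}} = 0}"
  have "open N"
    unfolding open_dist
  proof
    fix y assume "y \<in> N"
    then obtain \<delta> where "0 < \<delta>" and null: "prob {\<omega> \<in> space M. Y \<omega> \<in> {y-\<delta><..<y+\<delta>}} = 0"
      unfolding N_def by blast
    have "y' \<in> N" if "dist y' y < \<delta> / 2" for y'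
    proof -
      have "y - \<delta> / 2 < y'" "y' < y + \<delta> / 2" using that unfolding dist_real_def abs_less_iff by linarith+
      then have "prob {\<omega> \<in> space M. Y \<omega> \<in> {y'-\<delta>/2<..<y'+\<delta>/2}} \<le> prob {\<omega> \<in> space M. Y \<omega> \<in> {y-\<delta><..<y+\<delta>}}"
        by (intro finite_measure_mono) auto
      then show ?thesis unfolding N_def using null \<open>0 < \<delta>\<close> measure_nonneg
        by (intro CollectI exI[of _ "\<delta> / 2"]) (simp add: order_antisym)
    qed
    then show "\<exists>e>0. \<forall>y'. dist y' y < e \<longrightarrow> y' \<in> N" using \<open>0 < \<delta>\<close> by (intro exI[of _ "\<delta> / 2"]) auto
  qed
  moreover have "DY M Y = {0<..} - N"
    unfolding DY_def N_def by (auto simp: less_le)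
  ultimately show ?thesis by auto
qed

lemma AE_Y_in_DY: "AE \<omega> in M. Y \<omega> \<in> DY M Y"
proof -
  define Q where "Q = {(p, q) \<in> \<rat> \<times> \<rat>. prob {\<omega> \<in> space M. Y \<omega> \<in> {p<..<q}} = 0}"
  have "countable Q" unfolding Q_def
    by (rule countable_subset[of _ "\<rat> \<times> \<rat>"]) (auto intro: countable_rat)
  then have null: "(\<Union>(p, q)\<in>Q. {\<omega> \<in> space M. Y \<omega> \<in> {p<..<q}}) \<in> null_sets M"
    by (rule null_sets_UN') (auto simp: Q_def null_sets_def emeasure_eq_measure)
  show ?thesis
  proof (rule AE_I'[OF null], safe)
    fix \<omega> assume \<omega>: "\<omega> \<in> space M" "Y \<omega> \<notin> DY M Y"
    then obtain \<delta> where "0 < \<delta>" and null: "\<not> 0 < prob {\<omega>' \<in> space M. Y \<omega>' \<in> {Y \<omega>-\<delta><..<Y \<omega>+\<delta>}}"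
      using Y_pos unfolding DY_def by auto
    obtain p where p: "p \<in> \<rat>" "Y \<omega> - \<delta> < p" "p < Y \<omega>" using Rats_dense_in_real[of "Y \<omega> - \<delta>" "Y \<omega>"] \<open>0 < \<delta>\<close> by auto
    obtain q where q: "q \<in> \<rat>" "Y \<omega> < q" "q < Y \<omega> + \<delta>" using Rats_dense_in_real[of "Y \<omega>" "Y \<omega> + \<delta>"] \<open>0 < \<delta>\<close> by auto
    have "prob {\<omega>' \<in> space M. Y \<omega>' \<in> {p<..<q}} \<le> prob {\<omega>' \<in> space M. Y \<omega>' \<in> {Y \<omega>-\<delta><..<Y \<omega>+\<delta>}}"
      using p q by (intro finite_measure_mono) auto
    with null have "(p, q) \<in> Q" unfolding Q_def using p q measure_nonneg by (auto simp: not_less intro: antisym)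
    then show "\<omega> \<in> (\<Union>(p, q)\<in>Q. {\<omega> \<in> space M. Y \<omega> \<in> {p<..<q}})" using \<omega> p q by auto
  qed
qed

definition distr_Y :: "real measure" where
  "distr_Y = distr M borel Y"

(* On subsets of (0, oo) this is the law of Y restricted to the event x < X * Y;
   the complementary event is sent to the point 0. *)
definition exceed_distr :: "real \<Rightarrow> real measure" where
  "exceed_distr x = distr M borel (\<lambda>\<omega>. if x < X \<omega> * Y \<omega> then Y \<omega> else 0)"

definition truncated_integral :: "real \<Rightarrow> real \<Rightarrow> real \<Rightarrow> real" where
  "truncated_integral p T x =
     (\<integral>\<omega>. indicator {y \<in> DY M Y. y \<le> T} (Y \<omega>) * (tail M X (x / (p * Y \<omega>)) * s (Y \<omega>)) \<partial>M)"

lemma finite_borel_measure_distr_Y: "finite_borel_measure distr_Y"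
  unfolding distr_Y_def
  by (intro finite_borel_measure.intro finite_borel_measure_axioms.intro finite_measure_distr)
    (simp_all add: finite_measure_axioms)

lemma finite_borel_measure_exceed_distr: "finite_borel_measure (exceed_distr x)"
  unfolding exceed_distr_def
  by (intro finite_borel_measure.intro finite_borel_measure_axioms.intro finite_measure_distr)
    (simp_all add: finite_measure_axioms)

lemma measure_distr_Y: "A \<in> sets borel \<Longrightarrow> measure distr_Y A = prob {\<omega> \<in> space M. Y \<omega> \<in> A}"
  unfolding distr_Y_def by (subst measure_distr) (auto intro: arg_cong[where f = prob])

lemma measure_exceed_distr:
  assumes "A \<in> sets borel" "A \<subseteq> {0<..}"
  shows "measure (exceed_distr x) A = prob {\<omega> \<in> space M. x < X \<omega> * Y \<omega> \<and> Y \<omega> \<in> A}"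
  unfolding exceed_distr_def using assms
  by (subst measure_distr) (auto intro!: arg_cong[where f = prob] split: if_splits)

lemma set_integral_distr_Y:
  fixes f :: "real \<Rightarrow> real"
  assumes "f \<in> borel_measurable borel" "A \<in> sets borel"
  shows "(LINT y:A|distr_Y. f y) = (\<integral>\<omega>. indicator A (Y \<omega>) * f (Y \<omega>) \<partial>M)"
proof -
  have g: "(\<lambda>y. indicator A y *\<^sub>R f y) \<in> borel_measurable borel" using assms by measurable
  show ?thesis unfolding distr_Y_def set_lebesgue_integral_def integral_distr[OF Y_measurable g] by simp
qed

lemma joint_prob_eq_cond_ratio:
  "prob {\<omega> \<in> space M. w < X \<omega> \<and> Y \<omega> \<in> {y..<y+t}}
     = cond_ratio M X Y w y t * prob {\<omega> \<in> space M. Y \<omega> \<in> {y..<y+t}}"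
proof (cases "prob {\<omega> \<in> space M. Y \<omega> \<in> {y..<y+t}} = 0")
  case True
  have "prob {\<omega> \<in> space M. w < X \<omega> \<and> Y \<omega> \<in> {y..<y+t}} \<le> prob {\<omega> \<in> space M. Y \<omega> \<in> {y..<y+t}}"
    by (intro finite_measure_mono) auto
  with True show ?thesis by (simp add: measure_le_0_iff)
qed (simp add: cond_ratio_def)

lemma frequently_exceed_distr_le:
  assumes y: "y \<in> DY M Y" and q: "1 < q" and x: "0 < x"
    and less: "cond_tail M X Y (x / (q * y)) y < c"
  shows "\<exists>\<^sub>F t in at_right 0. measure (exceed_distr x) {y..<y+t} \<le> c * measure distr_Y {y..<y+t}"
proof (rule eventually_frequently)
  define w where "w = x / (q * y)"
  have "0 < y" using y by (simp add: DY_def)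
  have "\<forall>\<^sub>F t in at_right 0. cond_ratio M X Y w y t < c"
    using order_tendstoD(2)[OF cond_ratio_tendsto[OF y] less] unfolding w_def .
  moreover have "\<forall>\<^sub>F t in at_right 0. t < (q - 1) * y"
    unfolding eventually_at_right_field using q \<open>0 < y\<close> by (intro exI[of _ "(q - 1) * y"]) auto
  ultimately show "\<forall>\<^sub>F t in at_right 0. measure (exceed_distr x) {y..<y+t} \<le> c * measure distr_Y {y..<y+t}"
  proof eventually_elim
    case (elim t)
    have "w < X \<omega>" if "\<omega> \<in> space M" "x < X \<omega> * Y \<omega>" "Y \<omega> \<in> {y..<y+t}" for \<omega>
    proof -
      have "0 < Y \<omega>" "Y \<omega> < q * y" using that elim \<open>0 < y\<close> by (auto simp: algebra_simps)
      then have "w < x / Y \<omega>" unfolding w_def using x \<open>0 < y\<close> by (intro divide_strict_left_mono) auto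
      also have "x / Y \<omega> < X \<omega>" using that(2) \<open>0 < Y \<omega>\<close> by (simp add: pos_divide_less_eq)
      finally show ?thesis .
    qed
    then have "measure (exceed_distr x) {y..<y+t} \<le> prob {\<omega> \<in> space M. w < X \<omega> \<and> Y \<omega> \<in> {y..<y+t}}"
      using \<open>0 < y\<close> by (subst measure_exceed_distr) (auto intro!: finite_measure_mono)
    also have "\<dots> \<le> c * prob {\<omega> \<in> space M. Y \<omega> \<in> {y..<y+t}}"
      unfolding joint_prob_eq_cond_ratio using elim by (intro mult_right_mono) auto
    finally show ?case by (simp add: measure_distr_Y)
  qed
qed simp

lemma frequently_exceed_distr_ge:
  assumes y: "y \<in> DY M Y" and x: "0 < x" and less: "c < cond_tail M X Y (x / y) y"
  shows "\<exists>\<^sub>F t in at_right 0. c * measure distr_Y {y..<y+t} \<le> measure (exceed_distr x) {y..<y+t}"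
proof (rule eventually_frequently)
  have "0 < y" using y by (simp add: DY_def)
  show "\<forall>\<^sub>F t in at_right 0. c * measure distr_Y {y..<y+t} \<le> measure (exceed_distr x) {y..<y+t}"
    using order_tendstoD(1)[OF cond_ratio_tendsto[OF y] less]
  proof eventually_elim
    case (elim t)
    have "x < X \<omega> * Y \<omega>" if "x / y < X \<omega>" "Y \<omega> \<in> {y..<y+t}" for \<omega>
    proof -
      have "x < X \<omega> * y" using that(1) \<open>0 < y\<close> by (simp add: pos_divide_less_eq)
      also have "\<dots> \<le> X \<omega> * Y \<omega>"
        using that x \<open>0 < y\<close> by (intro mult_left_mono) (auto dest: order.strict_trans[OF divide_pos_pos[OF x \<open>0 < y\<close>]])
      finally show ?thesis .
    qed
    have "c * measure distr_Y {y..<y+t} \<le> cond_ratio M X Y (x / y) y t * prob {\<omega> \<in> space M. Y \<omega> \<in> {y..<y+t}}"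
      using elim by (simp add: measure_distr_Y mult_right_mono)
    also have "\<dots> = prob {\<omega> \<in> space M. x / y < X \<omega> \<and> Y \<omega> \<in> {y..<y+t}}"
      by (rule joint_prob_eq_cond_ratio[symmetric])
    also have "\<dots> \<le> measure (exceed_distr x) {y..<y+t}"
      using \<open>0 < y\<close> \<open>\<And>\<omega>. _ \<Longrightarrow> _ \<Longrightarrow> x < X \<omega> * Y \<omega>\<close>
      by (subst measure_exceed_distr) (auto intro!: finite_measure_mono)
    finally show ?case .
  qed
qed simp

lemma truncation_set_borel: "{y \<in> DY M Y. y \<le> T} \<in> sets borel"
proof -
  have "{y \<in> DY M Y. y \<le> T} = DY M Y \<inter> {..T}" by auto
  then show ?thesis by simp
qed

lemma truncation_weight_bounds:
  assumes "0 < c" "y \<in> DY M Y" "\<forall>y\<in>DY M Y. s y \<le> S"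
  shows "0 < c * (tail M X w * (indicator {0..} y * s y)) \<and> c * (tail M X w * (indicator {0..} y * s y)) \<le> c * S"
proof -
  have "0 < y" "0 < s y" "s y \<le> S" using assms s_pos unfolding DY_def by auto
  moreover have "tail M X w * s y \<le> 1 * S"
    using tail_X_le_1 tail_X_pos \<open>0 < s y\<close> \<open>s y \<le> S\<close> by (intro mult_mono) (auto simp: less_imp_le)
  ultimately show ?thesis using assms tail_X_pos by simp
qed

lemma truncated_integral_eq_set_integral:
  "c * truncated_integral p T x
     = (LINT y:{y \<in> DY M Y. y \<le> T}|distr_Y. c * (tail M X (x / (p * y)) * (indicator {0..} y * s y)))"
proof -
  have "(LINT y:{y \<in> DY M Y. y \<le> T}|distr_Y. c * (tail M X (x / (p * y)) * (indicator {0..} y * s y)))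
      = (\<integral>\<omega>. indicator {y \<in> DY M Y. y \<le> T} (Y \<omega>) *
           (c * (tail M X (x / (p * Y \<omega>)) * (indicator {0..} (Y \<omega>) * s (Y \<omega>)))) \<partial>M)"
    by (rule set_integral_distr_Y) (simp_all add: truncation_set_borel)
  also have "\<dots> = (\<integral>\<omega>. c * (indicator {y \<in> DY M Y. y \<le> T} (Y \<omega>) * (tail M X (x / (p * Y \<omega>)) * s (Y \<omega>))) \<partial>M)"
    using Y_pos by (intro Bochner_Integration.integral_cong) (auto simp: indicator_def less_imp_le)
  also have "\<dots> = c * truncated_integral p T x" by (simp add: truncated_integral_def)
  finally show ?thesis ..
qed

lemma prob_exceed_truncated_le:
  assumes q: "1 < q" and x: "0 < x" and x0: "x0 \<le> x / (q * T)" and c: "0 < c"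
    and bound: "\<forall>w\<ge>x0. \<forall>y\<in>DY M Y. cond_tail M X Y w y < c * (tail M X w * s y)"
  shows "prob {\<omega> \<in> space M. x < X \<omega> * Y \<omega> \<and> Y \<omega> \<in> DY M Y \<and> Y \<omega> \<le> T} \<le> c * truncated_integral q T x"
proof -
  obtain S where S: "\<forall>y\<in>DY M Y. s y \<le> S" using s_bounded_on_DY by blast
  define B where "B = {y \<in> DY M Y. y \<le> T}"
  define v where "v y = c * (tail M X (x / (q * y)) * (indicator {0..} y * s y))" for y
  have B: "B \<in> sets borel" "B \<subseteq> {0<..}" unfolding B_def using truncation_set_borel by (auto simp: DY_def)
  have v_bounds: "\<forall>y\<in>B. 0 < v y \<and> v y \<le> c * S"
    using truncation_weight_bounds[OF c _ S] unfolding B_def v_def by blast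
  have "\<forall>y\<in>B. \<exists>\<^sub>F t in at_right 0. measure (exceed_distr x) {y..<y+t} \<le> v y * measure distr_Y {y..<y+t}"
  proof
    fix y assume "y \<in> B"
    then have y: "y \<in> DY M Y" "0 < y" "y \<le> T" by (auto simp: B_def DY_def)
    have "x / (q * T) \<le> x / (q * y)" using x q y by (intro divide_left_mono mult_left_mono) auto
    then have "cond_tail M X Y (x / (q * y)) y < v y" using bound x0 y unfolding v_def by auto
    then show "\<exists>\<^sub>F t in at_right 0. measure (exceed_distr x) {y..<y+t} \<le> v y * measure distr_Y {y..<y+t}"
      by (rule frequently_exceed_distr_le[OF y(1) q x])
  qed
  then have "measure (exceed_distr x) B \<le> (LINT y:B|distr_Y. v y)"
    unfolding v_def by (intro measure_le_set_integral_of_frequently_Ico_le[OF finite_borel_measure_exceed_distr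
          finite_borel_measure_distr_Y B(1) _ v_bounds[unfolded v_def]]) auto
  then show ?thesis
    using B unfolding v_def B_def truncated_integral_eq_set_integral by (simp add: measure_exceed_distr)
qed

lemma prob_exceed_truncated_ge:
  assumes x: "0 < x" and x0: "x0 \<le> x / T" and c: "0 < c"
    and bound: "\<forall>w\<ge>x0. \<forall>y\<in>DY M Y. c * (tail M X w * s y) < cond_tail M X Y w y"
  shows "c * truncated_integral 1 T x \<le> prob {\<omega> \<in> space M. x < X \<omega> * Y \<omega> \<and> Y \<omega> \<in> DY M Y \<and> Y \<omega> \<le> T}"
proof -
  obtain S where S: "\<forall>y\<in>DY M Y. s y \<le> S" using s_bounded_on_DY by blast
  define B where "B = {y \<in> DY M Y. y \<le> T}"
  define v where "v y = c * (tail M X (x / (1 * y)) * (indicator {0..} y * s y))" for y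
  have B: "B \<in> sets borel" "B \<subseteq> {0<..}" unfolding B_def using truncation_set_borel by (auto simp: DY_def)
  have v_bounds: "\<forall>y\<in>B. 0 < v y \<and> v y \<le> c * S"
    using truncation_weight_bounds[OF c _ S] unfolding B_def v_def by blast
  have "\<forall>y\<in>B. \<exists>\<^sub>F t in at_right 0. v y * measure distr_Y {y..<y+t} \<le> measure (exceed_distr x) {y..<y+t}"
  proof
    fix y assume "y \<in> B"
    then have y: "y \<in> DY M Y" "0 < y" "y \<le> T" by (auto simp: B_def DY_def)
    have "x / T \<le> x / y" using x y by (intro divide_left_mono) auto
    then have "v y < cond_tail M X Y (x / y) y" using bound x0 y unfolding v_def by auto
    then show "\<exists>\<^sub>F t in at_right 0. v y * measure distr_Y {y..<y+t} \<le> measure (exceed_distr x) {y..<y+t}"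
      by (rule frequently_exceed_distr_ge[OF y(1) x])
  qed
  then have "(LINT y:B|distr_Y. v y) \<le> measure (exceed_distr x) B"
    unfolding v_def by (intro set_integral_le_measure_of_frequently_Ico_ge[OF finite_borel_measure_exceed_distr
          finite_borel_measure_distr_Y B(1) _ v_bounds[unfolded v_def]]) auto
  then show ?thesis
    using B unfolding v_def B_def truncated_integral_eq_set_integral by (simp add: measure_exceed_distr)
qed

definition s_moment :: "real \<Rightarrow> real" where
  "s_moment a = (\<integral>\<omega>. Y \<omega> powr a * s (Y \<omega>) \<partial>M)"

lemma truncated_integrand_tendsto:
  assumes RV: "regvar_tail (tail M X) \<alpha>" and "0 < p" and T: "filterlim T at_top at_top"
    and y: "y \<in> DY M Y"
  shows "((\<lambda>x. indicator {y \<in> DY M Y. y \<le> T x} y * (tail M X (x / (p * y)) * s y) / tail M X x)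
           \<longlongrightarrow> p powr \<alpha> * (y powr \<alpha> * s y)) at_top"
proof -
  have "0 < y" using y by (simp add: DY_def)
  have "((\<lambda>x. tail M X (x / (p * y)) / tail M X x) \<longlongrightarrow> (p * y) powr \<alpha>) at_top"
    using \<open>0 < p\<close> \<open>0 < y\<close> by (intro regvar_tail_divide_tendsto[OF RV]) simp
  from tendsto_mult[OF this tendsto_const[of "s y"]]
  have "((\<lambda>x. tail M X (x / (p * y)) / tail M X x * s y) \<longlongrightarrow> p powr \<alpha> * (y powr \<alpha> * s y)) at_top"
    using \<open>0 < p\<close> \<open>0 < y\<close> by (simp add: powr_mult mult.assoc)
  moreover have "\<forall>\<^sub>F x in at_top. tail M X (x / (p * y)) / tail M X x * s y
      = indicator {y \<in> DY M Y. y \<le> T x} y * (tail M X (x / (p * y)) * s y) / tail M X x"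
    using filterlim_at_top[THEN iffD1, OF T, rule_format, of y]
    by (rule eventually_mono) (use y in simp)
  ultimately show ?thesis by (rule Lim_transform_eventually)
qed

lemma truncated_integrand_le:
  assumes p: "1 \<le> p" "p \<le> q" and "0 < x" "0 < y"
    and dom: "y \<in> DY M Y \<Longrightarrow> y \<le> T \<Longrightarrow> tail M X (x / (q * y)) / tail M X x * s y \<le> d"
  shows "\<bar>indicator {y \<in> DY M Y. y \<le> T} y * (tail M X (x / (p * y)) * s y) / tail M X x\<bar> \<le> \<bar>d\<bar>"
proof (cases "y \<in> DY M Y \<and> y \<le> T")
  case True
  have "x / (q * y) \<le> x / (p * y)"
    using p \<open>0 < x\<close> \<open>0 < y\<close> by (intro divide_left_mono mult_right_mono) auto
  then have "tail M X (x / (p * y)) \<le> tail M X (x / (q * y))" by (rule antimonoD[OF antimono_tail_X])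
  then have "tail M X (x / (p * y)) / tail M X x * s y \<le> tail M X (x / (q * y)) / tail M X x * s y"
    using tail_X_pos s_pos[of y] \<open>0 < y\<close> by (intro mult_right_mono divide_right_mono) (auto simp: less_imp_le)
  also have "\<dots> \<le> \<bar>d\<bar>" using dom True by fastforce
  finally show ?thesis
    using True tail_X_pos[rule_format, of x] tail_X_pos[rule_format, of "x / (p * y)"] s_pos[of y] \<open>0 < y\<close>
    by simp
qed simp

lemma truncated_integral_tendsto:
  assumes RV: "regvar_tail (tail M X) \<alpha>" and p: "1 \<le> p" "p \<le> q"
    and T: "filterlim T at_top at_top" and D: "integrable M D"
    and dom: "\<forall>\<^sub>F x in at_top. \<forall>\<omega>\<in>space M. Y \<omega> \<in> DY M Y \<longrightarrow> Y \<omega> \<le> T x \<longrightarrow>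
                tail M X (x / (q * Y \<omega>)) / tail M X x * s (Y \<omega>) \<le> D \<omega>"
  shows "((\<lambda>x. truncated_integral p (T x) x / tail M X x) \<longlongrightarrow> p powr \<alpha> * s_moment \<alpha>) at_top"
proof -
  define f where "f x \<omega> = indicator {y \<in> DY M Y. y \<le> T x} (Y \<omega>) * (tail M X (x / (p * Y \<omega>)) * s (Y \<omega>)) / tail M X x"
    for x \<omega>
  have "((\<lambda>x. integral\<^sup>L M (f x)) \<longlongrightarrow> (\<integral>\<omega>. p powr \<alpha> * (Y \<omega> powr \<alpha> * s (Y \<omega>)) \<partial>M)) at_top"
  proof (rule integral_dominated_convergence_at_top[where w = "\<lambda>\<omega>. \<bar>D \<omega>\<bar>"])
    show "(\<lambda>\<omega>. p powr \<alpha> * (Y \<omega> powr \<alpha> * s (Y \<omega>))) \<in> borel_measurable M" by measurable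
    show "f x \<in> borel_measurable M" for x
      unfolding f_def using truncation_set_borel by measurable
    show "integrable M (\<lambda>\<omega>. \<bar>D \<omega>\<bar>)" using D by auto
    show "AE \<omega> in M. ((\<lambda>x. f x \<omega>) \<longlongrightarrow> p powr \<alpha> * (Y \<omega> powr \<alpha> * s (Y \<omega>))) at_top"
      using AE_Y_in_DY by eventually_elim (use truncated_integrand_tendsto[OF RV _ T] p in \<open>simp add: f_def\<close>)
    show "\<forall>\<^sub>F x in at_top. AE \<omega> in M. norm (f x \<omega>) \<le> \<bar>D \<omega>\<bar>"
      using dom eventually_gt_at_top[of 0]
    proof eventually_elim
      case (elim x)
      show ?case
      proof (rule AE_I2)
        fix \<omega> assume "\<omega> \<in> space M"
        then show "norm (f x \<omega>) \<le> \<bar>D \<omega>\<bar>"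
          unfolding f_def real_norm_def using elim Y_pos p by (intro truncated_integrand_le[where q = q]) auto
      qed
    qed
  qed
  moreover have "integral\<^sup>L M (f x) = truncated_integral p (T x) x / tail M X x" for x
    unfolding f_def truncated_integral_def by simp
  ultimately show ?thesis by (simp add: s_moment_def)
qed

(* The condition on x0 keeps every argument x / (q * y) with y <= T x in the range where the
   uniform CD estimate applies; D is the majorant for dominated convergence. *)
definition dominated_truncation :: "real \<Rightarrow> real \<Rightarrow> (real \<Rightarrow> real) \<Rightarrow> ('a \<Rightarrow> real) \<Rightarrow> bool" where
  "dominated_truncation q x0 T D \<longleftrightarrow>
     filterlim T at_top at_top \<and> (\<forall>\<^sub>F x in at_top. 0 < T x \<and> x0 \<le> x / (q * T x)) \<and>
     ((\<lambda>x. tail M Y (T x) / tail M X x) \<longlongrightarrow> 0) at_top \<and> integrable M D \<and>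
     (\<forall>\<^sub>F x in at_top. \<forall>\<omega>\<in>space M. Y \<omega> \<in> DY M Y \<longrightarrow> Y \<omega> \<le> T x \<longrightarrow>
        tail M X (x / (q * Y \<omega>)) / tail M X x * s (Y \<omega>) \<le> D \<omega>)"

lemma prob_product_exceeds_le:
  "prob {\<omega> \<in> space M. x < X \<omega> * Y \<omega>}
     \<le> prob {\<omega> \<in> space M. x < X \<omega> * Y \<omega> \<and> Y \<omega> \<in> DY M Y \<and> Y \<omega> \<le> T} + tail M Y T"
proof -
  have "prob {\<omega> \<in> space M. x < X \<omega> * Y \<omega>}
      \<le> prob ({\<omega> \<in> space M. x < X \<omega> * Y \<omega> \<and> Y \<omega> \<in> DY M Y \<and> Y \<omega> \<le> T} \<union> {\<omega> \<in> space M. T < Y \<omega>})"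
    using AE_Y_in_DY by (intro finite_measure_mono_AE) (auto elim!: AE_mp)
  also have "\<dots> \<le> prob {\<omega> \<in> space M. x < X \<omega> * Y \<omega> \<and> Y \<omega> \<in> DY M Y \<and> Y \<omega> \<le> T} + tail M Y T"
    unfolding tail_def by (intro measure_Un_le) auto
  finally show ?thesis .
qed

lemma product_tail_ratio_eventually_less:
  assumes RV: "regvar_tail (tail M X) \<alpha>" and adm: "\<forall>q>1. \<forall>x0. \<exists>T D. dominated_truncation q x0 T D"
    and a: "s_moment \<alpha> < a"
  shows "\<forall>\<^sub>F x in at_top. prob {\<omega> \<in> space M. x < X \<omega> * Y \<omega>} / tail M X x < a"
proof -
  have "((\<lambda>\<delta>. (1 + \<delta>) * ((1 + \<delta>) powr \<alpha> * s_moment \<alpha>)) \<longlongrightarrow> (1 + 0) * ((1 + 0) powr \<alpha> * s_moment \<alpha>)) (at_right 0)"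
    by (intro tendsto_intros) auto
  then have "\<forall>\<^sub>F \<delta> in at_right 0. (1 + \<delta>) * ((1 + \<delta>) powr \<alpha> * s_moment \<alpha>) < a"
    using a by (intro order_tendstoD(2)) auto
  with eventually_at_right_less have "\<forall>\<^sub>F \<delta> in at_right 0. 0 < \<delta> \<and> (1 + \<delta>) * ((1 + \<delta>) powr \<alpha> * s_moment \<alpha>) < a"
    by (rule eventually_conj)
  then obtain \<delta> where \<delta>: "0 < \<delta>" "(1 + \<delta>) * ((1 + \<delta>) powr \<alpha> * s_moment \<alpha>) < a"
    using eventually_happens'[OF trivial_limit_at_right_real] by blast
  define q where "q = 1 + \<delta>"
  have q: "1 < q" using \<delta> unfolding q_def by simp
  obtain x0 where x0: "\<forall>w\<ge>x0. \<forall>y\<in>DY M Y. cond_tail M X Y w y < q * (tail M X w * s y)"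
    using CD_tail_bounds[OF \<delta>(1)] unfolding q_def eventually_at_top_linorder by blast
  obtain T D where T: "dominated_truncation q x0 T D" using adm q by blast
  then have "((\<lambda>x. q * (truncated_integral q (T x) x / tail M X x) + tail M Y (T x) / tail M X x)
      \<longlongrightarrow> q * (q powr \<alpha> * s_moment \<alpha>) + 0) at_top"
    unfolding dominated_truncation_def
    by (intro tendsto_intros truncated_integral_tendsto[OF RV _ order_refl]) (use q in auto)
  then have "\<forall>\<^sub>F x in at_top. q * (truncated_integral q (T x) x / tail M X x) + tail M Y (T x) / tail M X x < a"
    using \<delta>(2) unfolding q_def by (intro order_tendstoD(2)) auto
  moreover have "\<forall>\<^sub>F x in at_top. 0 < T x \<and> x0 \<le> x / (q * T x)"
    using T unfolding dominated_truncation_def by blast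
  ultimately show ?thesis using eventually_gt_at_top[of 0]
  proof eventually_elim
    case (elim x)
    have "prob {\<omega> \<in> space M. x < X \<omega> * Y \<omega>}
        \<le> prob {\<omega> \<in> space M. x < X \<omega> * Y \<omega> \<and> Y \<omega> \<in> DY M Y \<and> Y \<omega> \<le> T x} + tail M Y (T x)"
      by (rule prob_product_exceeds_le)
    also have "\<dots> \<le> q * truncated_integral q (T x) x + tail M Y (T x)"
      using elim q x0 by (intro add_right_mono prob_exceed_truncated_le) auto
    finally have "prob {\<omega> \<in> space M. x < X \<omega> * Y \<omega>} \<le> q * truncated_integral q (T x) x + tail M Y (T x)" .
    then have "prob {\<omega> \<in> space M. x < X \<omega> * Y \<omega>} / tail M X x
        \<le> (q * truncated_integral q (T x) x + tail M Y (T x)) / tail M X x"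
      using tail_X_pos[rule_format, of x] by (intro divide_right_mono) auto
    also have "\<dots> = q * (truncated_integral q (T x) x / tail M X x) + tail M Y (T x) / tail M X x"
      by (simp add: add_divide_distrib)
    finally show ?case using elim by linarith
  qed
qed

lemma product_tail_ratio_eventually_greater:
  assumes RV: "regvar_tail (tail M X) \<alpha>" and adm: "\<forall>q>1. \<forall>x0. \<exists>T D. dominated_truncation q x0 T D"
    and a: "a < s_moment \<alpha>"
  shows "\<forall>\<^sub>F x in at_top. a < prob {\<omega> \<in> space M. x < X \<omega> * Y \<omega>} / tail M X x"
proof -
  have "((\<lambda>\<delta>. (1 - \<delta>) * s_moment \<alpha>) \<longlongrightarrow> (1 - 0) * s_moment \<alpha>) (at_right 0)"
    by (intro tendsto_intros)
  then have "\<forall>\<^sub>F \<delta> in at_right 0. a < (1 - \<delta>) * s_moment \<alpha>"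
    using a by (intro order_tendstoD(1)) auto
  moreover have "\<forall>\<^sub>F \<delta> in at_right (0::real). 0 < \<delta> \<and> \<delta> < 1"
    unfolding eventually_at_right_field by (intro exI[of _ 1]) auto
  ultimately have "\<forall>\<^sub>F \<delta> in at_right 0. a < (1 - \<delta>) * s_moment \<alpha> \<and> 0 < \<delta> \<and> \<delta> < 1"
    by (rule eventually_conj)
  then obtain \<delta> where \<delta>: "0 < \<delta>" "\<delta> < 1" "a < (1 - \<delta>) * s_moment \<alpha>"
    using eventually_happens'[OF trivial_limit_at_right_real] by blast
  obtain x0 where x0: "\<forall>w\<ge>x0. \<forall>y\<in>DY M Y. (1 - \<delta>) * (tail M X w * s y) < cond_tail M X Y w y"
    using CD_tail_bounds[OF \<delta>(1)] unfolding eventually_at_top_linorder by blast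
  obtain T D where T: "dominated_truncation 2 x0 T D" using adm by fastforce
  then have "((\<lambda>x. (1 - \<delta>) * (truncated_integral 1 (T x) x / tail M X x)) \<longlongrightarrow> (1 - \<delta>) * (1 powr \<alpha> * s_moment \<alpha>)) at_top"
    unfolding dominated_truncation_def
    by (intro tendsto_intros truncated_integral_tendsto[where p = 1 and q = 2, OF RV]) auto
  then have "\<forall>\<^sub>F x in at_top. a < (1 - \<delta>) * (truncated_integral 1 (T x) x / tail M X x)"
    using \<delta>(3) by (intro order_tendstoD(1)) auto
  moreover have "\<forall>\<^sub>F x in at_top. 0 < T x \<and> x0 \<le> x / (2 * T x)"
    using T unfolding dominated_truncation_def by blast
  ultimately show ?thesis using eventually_gt_at_top[of 0]
  proof eventually_elim
    case (elim x)
    have "x / (2 * T x) \<le> x / T x" using elim by (intro divide_left_mono) auto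
    then have "(1 - \<delta>) * truncated_integral 1 (T x) x
        \<le> prob {\<omega> \<in> space M. x < X \<omega> * Y \<omega> \<and> Y \<omega> \<in> DY M Y \<and> Y \<omega> \<le> T x}"
      using elim \<delta> x0 by (intro prob_exceed_truncated_ge[of x x0 "T x"]) auto
    also have "\<dots> \<le> prob {\<omega> \<in> space M. x < X \<omega> * Y \<omega>}" by (intro finite_measure_mono) auto
    finally have "(1 - \<delta>) * (truncated_integral 1 (T x) x / tail M X x)
        \<le> prob {\<omega> \<in> space M. x < X \<omega> * Y \<omega>} / tail M X x"
      using tail_X_pos[rule_format, of x] by (simp add: divide_right_mono)
    then show ?case using elim by linarith
  qed
qed

lemma product_tail_ratio_tendsto:
  assumes "regvar_tail (tail M X) \<alpha>" and "\<forall>q>1. \<forall>x0. \<exists>T D. dominated_truncation q x0 T D"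
  shows "((\<lambda>x. prob {\<omega> \<in> space M. x < X \<omega> * Y \<omega>} / tail M X x) \<longlongrightarrow> s_moment \<alpha>) at_top"
  by (intro order_tendstoI product_tail_ratio_eventually_greater[OF assms]
      product_tail_ratio_eventually_less[OF assms])

lemma truncation_bound_Potter:
  assumes Potter: "\<forall>x z. 1 \<le> z \<longrightarrow> x1 \<le> x / z \<longrightarrow> tail M X (x / z) \<le> (2 * z) powr \<beta> * tail M X x"
    and y: "y \<in> DY M Y" and S: "\<forall>y\<in>DY M Y. s y \<le> S"
    and "0 < x" "0 < q" "x1 \<le> x / (q * y)"
  shows "tail M X (x / (q * y)) / tail M X x * s y \<le> S + (2 * q) powr \<beta> * (y powr \<beta> * s y)"
proof -
  have "0 < y" "0 < s y" "s y \<le> S" using y S s_pos unfolding DY_def by auto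
  then have "tail M X (x / (q * y)) / tail M X x \<le> 1 + (2 * (q * y)) powr \<beta>"
    using assms by (intro tail_ratio_le_Potter[OF antimono_tail_X tail_X_pos Potter]) auto
  then have "tail M X (x / (q * y)) / tail M X x * s y \<le> (1 + (2 * q) powr \<beta> * y powr \<beta>) * s y"
    using \<open>0 < y\<close> \<open>0 < s y\<close> \<open>0 < q\<close> by (intro mult_right_mono) (auto simp: powr_mult mult.assoc)
  also have "\<dots> \<le> S + (2 * q) powr \<beta> * (y powr \<beta> * s y)"
    using \<open>s y \<le> S\<close> by (simp add: algebra_simps)
  finally show ?thesis .
qed

lemma dominated_truncation_of_moment:
  assumes RV: "regvar_tail (tail M X) \<alpha>" and "0 \<le> \<alpha>" "0 < \<epsilon>"
    and Y_small: "tail M Y \<in> o[at_top](tail M X)"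
    and int: "integrable M (\<lambda>\<omega>. Y \<omega> powr (\<alpha> + \<epsilon>) * s (Y \<omega>))"
    and q: "1 < q"
  shows "\<exists>T D. dominated_truncation q x0 T D"
proof -
  define \<beta> where "\<beta> = \<alpha> + \<epsilon>"
  obtain x1 where Potter: "\<forall>x z. 1 \<le> z \<longrightarrow> x1 \<le> x / z \<longrightarrow> tail M X (x / z) \<le> (2 * z) powr \<beta> * tail M X x"
    using regvar_tail_Potter_bound[OF RV, of \<beta>] tail_X_pos antimono_tail_X assms(2,3)
    unfolding \<beta>_def by auto
  obtain S where S: "\<forall>y\<in>DY M Y. s y \<le> S" using s_bounded_on_DY by blast
  define K where "K = q * max (max x0 x1) 1"
  have "0 < K" "x0 \<le> K / q" "x1 \<le> K / q" using q unfolding K_def by auto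
  define D where "D \<omega> = S + (2 * q) powr \<beta> * (Y \<omega> powr \<beta> * s (Y \<omega>))" for \<omega>
  have "\<forall>\<^sub>F x in at_top. 0 < x / K \<and> x0 \<le> x / (q * (x / K))"
    using eventually_gt_at_top[of 0]
    by eventually_elim (use \<open>0 < K\<close> q \<open>x0 \<le> K / q\<close> in \<open>simp add: field_simps\<close>)
  moreover have "((\<lambda>x. tail M Y (x / K) / tail M X x) \<longlongrightarrow> 0) at_top"
    using tail_X_pos
    by (intro smallo_compose_tendsto_zero[OF Y_small filterlim_divide_const_at_top
          regvar_tail_divide_tendsto[OF RV]] \<open>0 < K\<close>) (auto simp: less_imp_neq[symmetric])
  moreover have "integrable M D" unfolding D_def \<beta>_def using int by auto
  moreover have "\<forall>\<^sub>F x in at_top. \<forall>\<omega>\<in>space M. Y \<omega> \<in> DY M Y \<longrightarrow> Y \<omega> \<le> x / K \<longrightarrow>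
      tail M X (x / (q * Y \<omega>)) / tail M X x * s (Y \<omega>) \<le> D \<omega>"
    using eventually_gt_at_top[of 0]
  proof (rule eventually_mono, intro ballI impI)
    fix x \<omega> assume "0 < x" "\<omega> \<in> space M" "Y \<omega> \<in> DY M Y" "Y \<omega> \<le> x / K"
    then have "0 < Y \<omega>" by (simp add: DY_def)
    have "K / q = x / (q * (x / K))" using \<open>0 < x\<close> \<open>0 < K\<close> q by (simp add: field_simps)
    also have "\<dots> \<le> x / (q * Y \<omega>)"
      using \<open>Y \<omega> \<le> x / K\<close> \<open>0 < x\<close> \<open>0 < Y \<omega>\<close> \<open>0 < K\<close> q by (intro divide_left_mono mult_left_mono) auto
    finally have "x1 \<le> x / (q * Y \<omega>)" using \<open>x1 \<le> K / q\<close> by linarith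
    then show "tail M X (x / (q * Y \<omega>)) / tail M X x * s (Y \<omega>) \<le> D \<omega>"
      unfolding D_def using \<open>0 < x\<close> q \<open>Y \<omega> \<in> DY M Y\<close> by (intro truncation_bound_Potter[OF Potter _ S]) auto
  qed
  ultimately show ?thesis
    unfolding dominated_truncation_def using filterlim_divide_const_at_top[OF \<open>0 < K\<close>] by blast
qed

lemma truncation_bound_slowly_varying:
  fixes L g :: "real \<Rightarrow> real"
  assumes "0 < u0" and u0: "\<forall>u\<ge>u0. \<forall>v\<ge>u0. tail M X v / tail M X u \<le> 4 * (u / v) powr \<alpha> * (L v / L u)"
    and x': "u0 \<le> x'" "u0 \<le> inverse (g x')" "0 < g x'" and C: "\<forall>y\<in>{1..x' * g x'}. L (x' / y) / L x' \<le> C"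
    and R: "tail M X x' / tail M X x \<le> R"
    and y: "y \<in> DY M Y" "y \<le> x' * g x'" and S: "\<forall>y\<in>DY M Y. s y \<le> S"
  shows "tail M X (x' / y) / tail M X x * s y \<le> R * (S + 4 * \<bar>C\<bar> * (y powr \<alpha> * s y))"
proof -
  have "0 < y" "0 < s y" "s y \<le> S" using y S s_pos unfolding DY_def by auto
  have "x' / (x' * g x') = inverse (g x')" using x' \<open>0 < u0\<close> by (simp add: field_simps)
  then have "tail M X (x' / y) / tail M X x' \<le> 1 + 4 * \<bar>C\<bar> * y powr \<alpha>"
    using x' y \<open>0 < y\<close>
    by (intro tail_ratio_le_slowly_varying[OF antimono_tail_X tail_X_pos \<open>0 < u0\<close> u0 _ _ C]) auto
  with R have "tail M X (x' / y) / tail M X x' * (tail M X x' / tail M X x) * s y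
      \<le> (1 + 4 * \<bar>C\<bar> * y powr \<alpha>) * R * s y"
    using \<open>0 < s y\<close> tail_X_pos by (intro mult_mono mult_right_mono) (auto simp: less_imp_le)
  also have "\<dots> \<le> R * (S + 4 * \<bar>C\<bar> * (y powr \<alpha> * s y))"
    using \<open>s y \<le> S\<close> R tail_X_pos[rule_format, of x'] tail_X_pos[rule_format, of x]
    by (simp add: algebra_simps mult_left_mono order.trans[OF _ R])
  finally show ?thesis using tail_X_pos[rule_format, of x'] by simp
qed

lemma dominated_truncation_of_slowly_varying:
  fixes L g :: "real \<Rightarrow> real"
  assumes RV: "regvar_tail (tail M X) \<alpha>"
    and L: "\<forall>x>0. 0 < L x" and equiv: "tail M X \<sim>[at_top] (\<lambda>x. x powr (- \<alpha>) * L x)"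
    and g: "\<forall>x\<ge>0. 0 < g x" "(g \<longlongrightarrow> 0) at_top" "filterlim (\<lambda>x. x * g x) at_top at_top"
    and Y_small: "(\<lambda>x. tail M Y (x * g x)) \<in> o[at_top](tail M X)"
    and C: "\<forall>\<^sub>F x in at_top. \<forall>y\<in>{1..x * g x}. L (x / y) / L x \<le> C"
    and int: "integrable M (\<lambda>\<omega>. Y \<omega> powr \<alpha> * s (Y \<omega>))"
    and q: "1 < q"
  shows "\<exists>T D. dominated_truncation q x0 T D"
proof -
  obtain S where S: "\<forall>y\<in>DY M Y. s y \<le> S" using s_bounded_on_DY by blast
  obtain u0 where "0 < u0" and u0: "\<forall>u\<ge>u0. \<forall>v\<ge>u0. tail M X v / tail M X u \<le> 4 * (u / v) powr \<alpha> * (L v / L u)"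
    using asymp_equiv_powr_ratio_bound[OF equiv L tail_X_pos] by blast
  define T where "T x = x / q * g (x / q)" for x
  define D where "D \<omega> = 2 * q powr \<alpha> * (S + 4 * \<bar>C\<bar> * (Y \<omega> powr \<alpha> * s (Y \<omega>)))" for \<omega>
  have div_q: "filterlim (\<lambda>x. x / q) at_top at_top" using q by (intro filterlim_divide_const_at_top) simp
  have ratio_q: "((\<lambda>x. tail M X (x / q) / tail M X x) \<longlongrightarrow> q powr \<alpha>) at_top"
    using q by (intro regvar_tail_divide_tendsto[OF RV]) simp
  have two_q: "q powr \<alpha> < 2 * q powr \<alpha>" using q by simp
  have "\<forall>\<^sub>F u in at_top. 0 < g u" using eventually_ge_at_top[of 0] by eventually_elim (use g(1) in auto)
  from filterlim_compose[OF filterlim_inverse_at_top[OF g(2) this] div_q]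
  have inv_g: "filterlim (\<lambda>x. inverse (g (x / q))) at_top at_top" .
  have "\<forall>\<^sub>F x in at_top. 0 < T x \<and> x0 \<le> x / (q * T x)"
    using eventually_gt_at_top[of 0] filterlim_at_top[THEN iffD1, OF inv_g, rule_format, of x0]
  proof eventually_elim
    case (elim x)
    then have "0 < g (x / q)" using g(1) q by simp
    then show ?case using elim q by (simp add: T_def field_simps)
  qed
  moreover have "((\<lambda>x. tail M Y (T x) / tail M X x) \<longlongrightarrow> 0) at_top"
    unfolding T_def using tail_X_pos
    by (intro smallo_compose_tendsto_zero[OF Y_small div_q ratio_q]) (simp add: less_imp_neq[symmetric])
  moreover have "integrable M D" unfolding D_def using int by auto
  moreover have "\<forall>\<^sub>F x in at_top. \<forall>\<omega>\<in>space M. Y \<omega> \<in> DY M Y \<longrightarrow> Y \<omega> \<le> T x \<longrightarrow>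
      tail M X (x / (q * Y \<omega>)) / tail M X x * s (Y \<omega>) \<le> D \<omega>"
    using filterlim_at_top[THEN iffD1, OF div_q, rule_format, of u0]
      filterlim_at_top[THEN iffD1, OF inv_g, rule_format, of u0]
      filterlim_iff[THEN iffD1, OF div_q, rule_format, OF C] order_tendstoD(2)[OF ratio_q two_q]
  proof eventually_elim
    case (elim x)
    have "0 < g (x / q)" using elim \<open>0 < u0\<close> g(1) by simp
    show ?case
    proof (intro ballI impI)
      fix \<omega> assume "\<omega> \<in> space M" "Y \<omega> \<in> DY M Y" "Y \<omega> \<le> T x"
      then have "tail M X (x / q / Y \<omega>) / tail M X x * s (Y \<omega>) \<le> D \<omega>"
        unfolding D_def T_def using elim \<open>0 < g (x / q)\<close>
        by (intro truncation_bound_slowly_varying[OF \<open>0 < u0\<close> u0 _ _ _ _ _ _ _ S]) auto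
      then show "tail M X (x / (q * Y \<omega>)) / tail M X x * s (Y \<omega>) \<le> D \<omega>" by (simp add: mult.commute)
    qed
  qed
  moreover have "filterlim T at_top at_top"
    unfolding T_def[abs_def] by (rule filterlim_compose[OF g(3) div_q])
  ultimately show ?thesis unfolding dominated_truncation_def by blast
qed

lemma integrable_s_moment_of_higher:
  assumes "0 \<le> \<alpha>" "0 < \<epsilon>" and int: "integrable M (\<lambda>\<omega>. Y \<omega> powr (\<alpha> + \<epsilon>) * s (Y \<omega>))"
  shows "integrable M (\<lambda>\<omega>. Y \<omega> powr \<alpha> * s (Y \<omega>))"
proof -
  obtain S where S: "\<forall>y\<in>DY M Y. s y \<le> S" using s_bounded_on_DY by blast
  show ?thesis
  proof (rule Bochner_Integration.integrable_bound)
    show "integrable M (\<lambda>\<omega>. S + Y \<omega> powr (\<alpha> + \<epsilon>) * s (Y \<omega>))" using int by auto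
    show "AE \<omega> in M. norm (Y \<omega> powr \<alpha> * s (Y \<omega>)) \<le> norm (S + Y \<omega> powr (\<alpha> + \<epsilon>) * s (Y \<omega>))"
      using AE_Y_in_DY
    proof eventually_elim
      case (elim \<omega>)
      define y where "y = Y \<omega>"
      have y: "0 < y" "0 < s y" "s y \<le> S" using elim S s_pos unfolding y_def DY_def by auto
      have "y powr \<alpha> \<le> 1 + y powr (\<alpha> + \<epsilon>)"
      proof (cases "y \<le> 1")
        case True
        then have "y powr \<alpha> \<le> 1" using y assms by (intro powr_le1) auto
        then show ?thesis using powr_ge_zero[of y "\<alpha> + \<epsilon>"] by linarith
      next
        case False
        then have "y powr \<alpha> \<le> y powr (\<alpha> + \<epsilon>)" using assms by (intro powr_mono) auto
        then show ?thesis by simp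
      qed
      then have "y powr \<alpha> * s y \<le> (1 + y powr (\<alpha> + \<epsilon>)) * s y" using y by (intro mult_right_mono) auto
      also have "\<dots> \<le> S + y powr (\<alpha> + \<epsilon>) * s y" using y by (simp add: algebra_simps)
      finally show ?case using y unfolding y_def[symmetric] by simp
    qed
  qed measurable
qed

lemma s_moment_pos:
  assumes "integrable M (\<lambda>\<omega>. Y \<omega> powr \<alpha> * s (Y \<omega>))"
  shows "0 < s_moment \<alpha>"
proof -
  have pos: "0 < Y \<omega> powr \<alpha> * s (Y \<omega>)" if "\<omega> \<in> space M" for \<omega>
  proof -
    have "0 < Y \<omega>" using that Y_pos by simp
    then show ?thesis using s_pos[of "Y \<omega>"] by simp
  qed
  have "0 \<le> s_moment \<alpha>" unfolding s_moment_def using pos by (intro integral_nonneg_AE AE_I2) (auto intro: less_imp_le)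
  moreover have "s_moment \<alpha> \<noteq> 0"
  proof
    assume "s_moment \<alpha> = 0"
    then have "AE \<omega> in M. Y \<omega> powr \<alpha> * s (Y \<omega>) = 0"
      using integral_nonneg_eq_0_iff_AE[OF assms] pos unfolding s_moment_def by (auto intro: less_imp_le)
    then have "AE \<omega> in M. False" by (rule AE_mp) (use pos in \<open>fastforce intro!: AE_I2\<close>)
    then show False by simp
  qed
  ultimately show ?thesis by simp
qed

end

theorem theorem2p1:
  fixes M :: "'a measure" and X Y :: "'a \<Rightarrow> real" and s L :: "real \<Rightarrow> real" and \<alpha> :: real
  assumes "prob_space M"
    and "X \<in> borel_measurable M" and "Y \<in> borel_measurable M"
    and "\<forall>\<omega>\<in>space M. Y \<omega> > 0"
    and "\<forall>x. tail M X x > 0"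
    and "CD M X Y s"
    and "\<alpha> \<ge> 0" and "regvar_tail (tail M X) \<alpha>"
    and "\<forall>x>0. L x > 0" and "slowly_varying L"
    and "tail M X \<sim>[at_top] (\<lambda>x. x powr (-\<alpha>) * L x)"
    and "tail M Y \<in> o[at_top](tail M X)"
    and "(\<exists>\<epsilon>>0. integrable M (\<lambda>\<omega>. Y \<omega> powr (\<alpha> + \<epsilon>) * s (Y \<omega>)))
         \<or> (\<exists>g :: real \<Rightarrow> real.
              (\<forall>x\<ge>0. g x > 0) \<and> antimono_on {0..} g \<and> (g \<longlongrightarrow> 0) at_top \<and>
              mono_on {0..} (\<lambda>x. x * g x) \<and> filterlim (\<lambda>x. x * g x) at_top at_top \<and>
              (\<lambda>x. tail M Y (x * g x)) \<in> o[at_top](tail M X) \<and>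
              (\<exists>C. eventually (\<lambda>x. \<forall>y\<in>{1..x * g x}. L (x / y) / L x \<le> C) at_top) \<and>
              integrable M (\<lambda>\<omega>. Y \<omega> powr \<alpha> * s (Y \<omega>)))"
  shows "(\<lambda>x. measure M {\<omega> \<in> space M. X \<omega> * Y \<omega> > x})
           \<sim>[at_top] (\<lambda>x. (\<integral>\<omega>. Y \<omega> powr \<alpha> * s (Y \<omega>) \<partial>M) * tail M X x)"
proof -
  interpret cd_vector M X Y s
    using assms(1-6) by (intro cd_vector.intro cd_vector_axioms.intro) auto
  \<comment> \<open>Case (ii) only needs the bound on \<open>L (x / y) / L x\<close>, \<open>g \<longlongrightarrow> 0\<close> and \<open>x * g x \<longlongrightarrow> \<infinity>\<close>.\<close>
  have "integrable M (\<lambda>\<omega>. Y \<omega> powr \<alpha> * s (Y \<omega>)) \<and> (\<forall>q>1. \<forall>x0. \<exists>T D. dominated_truncation q x0 T D)"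
    using assms(13)
  proof (elim disjE exE conjE)
    fix \<epsilon> assume "0 < \<epsilon>" "integrable M (\<lambda>\<omega>. Y \<omega> powr (\<alpha> + \<epsilon>) * s (Y \<omega>))"
    then show ?thesis
      using integrable_s_moment_of_higher dominated_truncation_of_moment assms(7,8,12) by blast
  next
    fix g C assume "\<forall>x\<ge>0. 0 < g x" "(g \<longlongrightarrow> 0) at_top" "filterlim (\<lambda>x. x * g x) at_top at_top"
      "(\<lambda>x. tail M Y (x * g x)) \<in> o[at_top](tail M X)"
      "\<forall>\<^sub>F x in at_top. \<forall>y\<in>{1..x * g x}. L (x / y) / L x \<le> C"
      "integrable M (\<lambda>\<omega>. Y \<omega> powr \<alpha> * s (Y \<omega>))"
    then show ?thesis
      using dominated_truncation_of_slowly_varying[OF assms(8,9,11)] by blast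
  qed
  then have "((\<lambda>x. prob {\<omega> \<in> space M. x < X \<omega> * Y \<omega>} / tail M X x) \<longlongrightarrow> s_moment \<alpha>) at_top"
    and "0 < s_moment \<alpha>"
    using product_tail_ratio_tendsto[OF assms(8)] s_moment_pos by auto
  then show ?thesis unfolding s_moment_def by (intro asymp_equivI'_const) auto
qed

end
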